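(* Let $\mathcal{F}_1,\ldots,\mathcal{F}_n$ be finite families of convex subsets of $\mathbb{R}^d$. If $\bigcap\mathcal{F}_i=\emptyset$ for all $i\in[n]$ and $n\ge d+2$, then $\mathbf{RG}_{\mathrm{CH}}(\mathcal{F}_1,\ldots,\mathcal{F}_n)$ is connected.
   Context: $\mathbf{RG}_{\mathrm{CH}}(\mathcal{F}_1,\ldots,\mathcal{F}_n)$ is the graph whose vertices are the ordered tuples $(C_1,\ldots,C_n)$ with $C_i\in\mathcal{F}_i$ for all $i$ and $\bigcap_{i=1}^n C_i=\emptyset$; two tuples $(C_1,\ldots,C_n)$ and $(D_1,\ldots,D_n)$ are adjacent if there is a unique index $j$ with $C_j\neq D_j$ and moreover $\bigcap_{i\neq j}C_i=\emptyset$. *)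

theory Defs
  imports "HOL-Analysis.Analysis"
begin

text \<open>Families F 0, ..., F (n-1); a tuple (C_1,...,C_n) is a list of length n.\<close>

definition rg_vertex :: "nat \<Rightarrow> (nat \<Rightarrow> 'a set set) \<Rightarrow> 'a set list \<Rightarrow> bool" where
  "rg_vertex n F C \<longleftrightarrow> length C = n \<and> (\<forall>i<n. C ! i \<in> F i) \<and> (\<Inter>i\<in>{..<n}. C ! i) = {}"

definition rg_adj :: "nat \<Rightarrow> (nat \<Rightarrow> 'a set set) \<Rightarrow> 'a set list \<Rightarrow> 'a set list \<Rightarrow> bool" where
  "rg_adj n F C D \<longleftrightarrow> rg_vertex n F C \<and> rg_vertex n F D \<and>
     (\<exists>!j. j < n \<and> C ! j \<noteq> D ! j) \<and>
     (\<forall>j<n. C ! j \<noteq> D ! j \<longrightarrow> (\<Inter>i\<in>{..<n} - {j}. C ! i) = {})"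

definition rg_connected :: "nat \<Rightarrow> (nat \<Rightarrow> 'a set set) \<Rightarrow> bool" where
  "rg_connected n F \<longleftrightarrow> (\<forall>C D. rg_vertex n F C \<and> rg_vertex n F D \<longrightarrow> (rg_adj n F)\<^sup>*\<^sup>* C D)"

end

theory Submission
  imports Defs
begin

text \<open>
  A tuple is a full selection from the join of the families; the vertices of \<open>RG\<close> are the full
  selections with empty intersection. All partial selections with empty intersection form the
  complement of the nerve, and a path of comparable such selections lifts to \<open>RG\<close>, since the
  completions of one of them are connected by changing one coordinate at a time.

  The complement of the nerve is connected by a sweep: every face of the nerve is keyed by the
  point of its intersection closest to a centre \<open>c\<close>, and the faces are deleted from the cone of
  all partial selections in order of the distance of their key from \<open>c\<close>. Deleting the faces with
  key \<open>q\<close> keeps the rest connected. The selections above a face whose intersection misses the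
  open ball through \<open>q\<close> are connected, because by Helly such a face has a subface with at most
  \<open>d\<close> colours doing the same, and there are at least \<open>d + 2\<close> colours. To pass between such
  subfaces of a deleted face one walks in its link, which is again the complement of a nerve:
  that of the cones of directions at \<open>q\<close> pointing into the ball, one label per colour, in a
  hyperplane of dimension \<open>d - 1\<close>. This is handled by induction on the dimension.
\<close>

section \<open>Helly's theorem in an affine subspace\<close>

lemma affine_dependent_if_card_gt_aff_dim:
  fixes B :: "'a::euclidean_space set"
  assumes "finite B" "B \<subseteq> S" "aff_dim S \<le> int e" "card B \<ge> e + 2"
  shows "affine_dependent B"
proof (rule ccontr)
  assume "\<not> affine_dependent B"
  then have "int (card B) = aff_dim B + 1"
    by (rule aff_dim_affine_independent)
  moreover have "aff_dim B \<le> aff_dim S"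
    using assms(2) by (rule aff_dim_subset)
  ultimately show False
    using assms(3,4) by linarith
qed

lemma Inter_nonempty_if_Radon_witnesses:
  fixes \<F> :: "'a::euclidean_space set set"
  assumes "\<forall>T\<in>\<F>. convex T" and X: "\<And>T. T \<in> \<F> \<Longrightarrow> X T \<in> \<Inter>(\<F> - {T})"
    and "inj_on X \<F>" "affine_dependent (X ` \<F>)"
  shows "\<Inter>\<F> \<noteq> {}"
proof -
  obtain M P where MP: "M \<subseteq> X ` \<F>" "P \<subseteq> X ` \<F>" "M \<inter> P = {}" "convex hull M \<inter> convex hull P \<noteq> {}"
    using assms(4) by (rule Radon)
  then obtain \<G> \<H> where GH: "M = X ` \<G>" "P = X ` \<H>" "\<G> \<subseteq> \<F>" "\<H> \<subseteq> \<F>"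
    by (meson subset_imageE)
  have "\<G> \<inter> \<H> = {}"
    using MP(3) GH assms(3) by (auto simp: inj_on_def)
  have hull_sub: "convex hull (X ` \<A>) \<subseteq> \<Inter>(\<F> - \<A>)" if "\<A> \<subseteq> \<F>" for \<A>
  proof (rule hull_minimal)
    show "X ` \<A> \<subseteq> \<Inter>(\<F> - \<A>)"
      using X that by blast
    show "convex (\<Inter>(\<F> - \<A>))"
      using assms(1) by (intro convex_Inter) blast
  qed
  have "\<Inter>(\<F> - \<G>) \<inter> \<Inter>(\<F> - \<H>) \<noteq> {}"
    using MP(4) hull_sub[OF GH(3)] hull_sub[OF GH(4)] GH(1,2) by blast
  moreover have "\<Inter>(\<F> - \<G>) \<inter> \<Inter>(\<F> - \<H>) = \<Inter>\<F>"
    using \<open>\<G> \<inter> \<H> = {}\<close> by blast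
  ultimately show ?thesis
    by simp
qed

lemma Helly_affine_step:
  fixes \<F> :: "'a::euclidean_space set set"
  assumes "finite \<F>" "card \<F> \<ge> e + 2" "aff_dim S \<le> int e"
    and "\<forall>T\<in>\<F>. convex T \<and> T \<subseteq> S" and "\<forall>T\<in>\<F>. \<Inter>(\<F> - {T}) \<noteq> {}"
  shows "\<Inter>\<F> \<noteq> {}"
proof -
  have "\<forall>T\<in>\<F>. \<exists>x. x \<in> \<Inter>(\<F> - {T})"
    using assms(5) by blast
  then obtain X where X: "\<And>T. T \<in> \<F> \<Longrightarrow> X T \<in> \<Inter>(\<F> - {T})"
    by metis
  show ?thesis
  proof (cases "inj_on X \<F>")
    case False
    then obtain T U where TU: "T \<in> \<F>" "U \<in> \<F>" "T \<noteq> U" "X T = X U"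
      unfolding inj_on_def by blast
    then have "X T \<in> \<Inter>(\<F> - {T}) \<inter> \<Inter>(\<F> - {U})"
      using X[OF TU(1)] X[OF TU(2)] TU(4) by simp
    moreover have "\<Inter>(\<F> - {T}) \<inter> \<Inter>(\<F> - {U}) = \<Inter>\<F>"
      using TU(3) by blast
    ultimately show ?thesis by auto
  next
    case True
    have "X ` \<F> \<subseteq> S"
    proof
      fix x assume "x \<in> X ` \<F>"
      then obtain T where T: "T \<in> \<F>" "x = X T" by blast
      have "card (\<F> - {T}) > 0"
        using assms(1,2) T(1) by simp
      then have "\<F> - {T} \<noteq> {}"
        by (metis card.empty less_irrefl)
      then show "x \<in> S"
        using X[OF T(1)] T(2) assms(4) by blast
    qed
    then have "affine_dependent (X ` \<F>)"
      using assms(1-3) card_image[OF True]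
      by (intro affine_dependent_if_card_gt_aff_dim[where S = S and e = e]) auto
    moreover have "\<forall>T\<in>\<F>. convex T"
      using assms(4) by blast
    ultimately show ?thesis
      using Inter_nonempty_if_Radon_witnesses[OF _ X True] by blast
  qed
qed

lemma Helly_affine:
  fixes \<F> :: "'a::euclidean_space set set"
  assumes "finite \<F>" "aff_dim S \<le> int e" "\<forall>T\<in>\<F>. convex T \<and> T \<subseteq> S"
    and "\<And>\<G>. \<G> \<subseteq> \<F> \<Longrightarrow> card \<G> \<le> e + 1 \<Longrightarrow> \<Inter>\<G> \<noteq> {}"
  shows "\<Inter>\<F> \<noteq> {}"
  using assms(1,3,4)
proof (induction "card \<F>" arbitrary: \<F> rule: less_induct)
  case less
  show ?case
  proof (cases "card \<F> \<le> e + 1")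
    case True
    then show ?thesis
      using less.prems(3) by blast
  next
    case False
    have "\<Inter>(\<F> - {T}) \<noteq> {}" if "T \<in> \<F>" for T
    proof (rule less.hyps)
      show "card (\<F> - {T}) < card \<F>"
        using less.prems(1) that by (rule card_Diff1_less)
      show "\<And>\<G>. \<G> \<subseteq> \<F> - {T} \<Longrightarrow> card \<G> \<le> e + 1 \<Longrightarrow> \<Inter>\<G> \<noteq> {}"
        using less.prems(3) by blast
    qed (use less.prems in auto)
    then show ?thesis
      using Helly_affine_step[OF less.prems(1) _ assms(2) less.prems(2)] False by simp
  qed
qed

lemma Helly_affine_avoiding:
  fixes Z :: "'i \<Rightarrow> 'a::euclidean_space set"
  assumes "finite I" "aff_dim S \<le> int e" "\<forall>i\<in>I. convex (Z i) \<and> Z i \<subseteq> S"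
    and "convex B" "B \<subseteq> S" "(\<Inter>i\<in>I. Z i) \<noteq> {}" "(\<Inter>i\<in>I. Z i) \<inter> B = {}"
  shows "\<exists>J\<subseteq>I. card J \<le> e \<and> (\<Inter>i\<in>J. Z i) \<inter> B = {}"
proof (rule ccontr)
  assume small_meet: "\<not> ?thesis"
  have "\<Inter>(insert B (Z ` I)) \<noteq> {}"
  proof (rule Helly_affine[where S = S and e = e])
    fix \<G> assume \<G>: "\<G> \<subseteq> insert B (Z ` I)" "card \<G> \<le> e + 1"
    show "\<Inter>\<G> \<noteq> {}"
    proof (cases "B \<in> \<G>")
      case True
      have "\<G> - {B} \<subseteq> Z ` I"
        using \<G>(1) by blast
      then obtain J where J: "J \<subseteq> I" "inj_on Z J" "\<G> - {B} = Z ` J"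
        by (auto simp: subset_image_inj)
      have "card J = card (\<G> - {B})"
        using J(2,3) by (simp add: card_image)
      also have "\<dots> \<le> e"
        using \<G>(2) True finite_subset[OF \<G>(1)] assms(1) by simp
      finally have "(\<Inter>i\<in>J. Z i) \<inter> B \<noteq> {}"
        using small_meet J(1) by blast
      moreover have "\<Inter>\<G> = (\<Inter>i\<in>J. Z i) \<inter> B"
        using True J(3) by blast
      ultimately show ?thesis by simp
    next
      case False
      then have "(\<Inter>i\<in>I. Z i) \<subseteq> \<Inter>\<G>"
        using \<G>(1) by blast
      then show ?thesis
        using assms(6) by blast
    qed
  qed (use assms in auto)
  then show False
    using assms(7) by blast
qed

section \<open>Partial selections\<close>

lemma map_le_SomeD: "f \<subseteq>\<^sub>m g \<Longrightarrow> f i = Some y \<Longrightarrow> g i = Some y"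
  unfolding map_le_def by (metis domI)

lemma ran_map_le: "f \<subseteq>\<^sub>m g \<Longrightarrow> ran f \<subseteq> ran g"
  by (auto simp: ran_def dest: map_le_SomeD)

lemma map_le_upd_new: "i \<notin> dom f \<Longrightarrow> f \<subseteq>\<^sub>m f(i \<mapsto> y)"
  unfolding map_le_def by auto

lemma ran_eq_image_dom: "ran g = (\<lambda>i. the (g i)) ` dom g"
  unfolding ran_def dom_def by force

text \<open>
  A partial selection \<open>f\<close> picks a label \<open>f i \<in> L i\<close> for some colours \<open>i \<in> I\<close>; ordered by
  \<open>\<subseteq>\<^sub>m\<close> they are the faces of the join of the label sets, and label \<open>y\<close> stands for the
  set \<open>Y y\<close>.
\<close>

definition partial_sel :: "'i set \<Rightarrow> ('i \<Rightarrow> 'l set) \<Rightarrow> ('i \<Rightarrow> 'l option) \<Rightarrow> bool" where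
  "partial_sel I L f \<longleftrightarrow> dom f \<subseteq> I \<and> (\<forall>i y. f i = Some y \<longrightarrow> y \<in> L i)"

definition admissible :: "'i set \<Rightarrow> ('i \<Rightarrow> 'l set) \<Rightarrow> bool \<Rightarrow> ('i \<Rightarrow> 'l option) \<Rightarrow> bool" where
  "admissible I L proper f \<longleftrightarrow> partial_sel I L f \<and> (proper \<longrightarrow> dom f \<noteq> I)"

definition sel_Inter :: "('l \<Rightarrow> 'a set) \<Rightarrow> ('i \<Rightarrow> 'l option) \<Rightarrow> 'a set" where
  "sel_Inter Y f = \<Inter>(Y ` ran f)"

definition empty_sels ::
  "'i set \<Rightarrow> ('i \<Rightarrow> 'l set) \<Rightarrow> ('l \<Rightarrow> 'a set) \<Rightarrow> bool \<Rightarrow> ('i \<Rightarrow> 'l option) set" where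
  "empty_sels I L Y proper = {f. admissible I L proper f \<and> sel_Inter Y f = {}}"

definition comparable_in :: "('i \<Rightarrow> 'l option) set \<Rightarrow> ('i \<Rightarrow> 'l option) \<Rightarrow> ('i \<Rightarrow> 'l option) \<Rightarrow> bool" where
  "comparable_in P u v \<longleftrightarrow> u \<in> P \<and> v \<in> P \<and> (u \<subseteq>\<^sub>m v \<or> v \<subseteq>\<^sub>m u)"

definition comparability_connected :: "('i \<Rightarrow> 'l option) set \<Rightarrow> bool" where
  "comparability_connected P \<longleftrightarrow> (\<forall>u\<in>P. \<forall>v\<in>P. (comparable_in P)\<^sup>*\<^sup>* u v)"

lemma comparable_in_map_le:
  "u \<in> P \<Longrightarrow> v \<in> P \<Longrightarrow> u \<subseteq>\<^sub>m v \<Longrightarrow> (comparable_in P)\<^sup>*\<^sup>* u v"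
  "u \<in> P \<Longrightarrow> v \<in> P \<Longrightarrow> v \<subseteq>\<^sub>m u \<Longrightarrow> (comparable_in P)\<^sup>*\<^sup>* u v"
  by (simp_all add: comparable_in_def r_into_rtranclp)

lemma partial_sel_map_le:
  assumes "partial_sel I L g" "f \<subseteq>\<^sub>m g"
  shows "partial_sel I L f"
proof -
  have "dom f \<subseteq> I"
    using map_le_implies_dom_le[OF assms(2)] assms(1) unfolding partial_sel_def by blast
  then show ?thesis
    using assms map_le_SomeD unfolding partial_sel_def by metis
qed

lemma partial_sel_upd: "partial_sel I L f \<Longrightarrow> i \<in> I \<Longrightarrow> y \<in> L i \<Longrightarrow> partial_sel I L (f(i \<mapsto> y))"
  unfolding partial_sel_def by auto

lemma partial_sel_ranE:
  assumes "partial_sel I L f" "y \<in> ran f"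
  obtains i where "i \<in> I" "f i = Some y" "y \<in> L i"
  using assms unfolding partial_sel_def ran_def by auto

lemma finite_dom_partial_sel: "partial_sel I L f \<Longrightarrow> finite I \<Longrightarrow> finite (dom f)"
  unfolding partial_sel_def using finite_subset by blast

lemma sel_Inter_antimono: "f \<subseteq>\<^sub>m g \<Longrightarrow> sel_Inter Y g \<subseteq> sel_Inter Y f"
  unfolding sel_Inter_def using ran_map_le by blast

lemma sel_Inter_restrict:
  assumes "J \<subseteq> dom f"
  shows "sel_Inter Y (f |` J) = (\<Inter>i\<in>J. Y (the (f i)))"
proof -
  have "dom (f |` J) = J"
    using assms by auto
  then have "ran (f |` J) = (\<lambda>i. the ((f |` J) i)) ` J"
    by (simp only: ran_eq_image_dom)
  also have "\<dots> = (\<lambda>i. the (f i)) ` J"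
    by auto
  finally show ?thesis
    unfolding sel_Inter_def by (simp add: image_image)
qed

lemma finite_partial_sels:
  assumes "finite I" "\<forall>i\<in>I. finite (L i)"
  shows "finite {f. partial_sel I L f}"
proof (rule finite_subset)
  let ?labels = "\<Union>(L ` I)"
  show "{f. partial_sel I L f} \<subseteq> (\<Union>A\<in>Pow I. {m. dom m = A \<and> ran m \<subseteq> ?labels})"
  proof safe
    fix f assume f: "partial_sel I L f"
    then have "ran f \<subseteq> ?labels"
      by (blast elim: partial_sel_ranE)
    moreover have "dom f \<in> Pow I"
      using f unfolding partial_sel_def by simp
    ultimately show "f \<in> (\<Union>A\<in>Pow I. {m. dom m = A \<and> ran m \<subseteq> ?labels})"
      by blast
  qed
  show "finite (\<Union>A\<in>Pow I. {m. dom m = A \<and> ran m \<subseteq> ?labels})"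
    using assms by (intro finite_UN_I finite_set_of_finite_maps) (auto intro: finite_subset)
qed

section \<open>Sweeping the nerve\<close>

text \<open>
  The \<open>proper\<close> variant arises in the induction on the dimension as the link of a face
  of the nerve.
\<close>

definition conn_setting ::
  "'i set \<Rightarrow> ('i \<Rightarrow> 'l set) \<Rightarrow> ('l \<Rightarrow> 'a::euclidean_space set) \<Rightarrow> bool \<Rightarrow> 'a set \<Rightarrow> nat \<Rightarrow> bool" where
  "conn_setting I L Y proper S e \<longleftrightarrow> finite I \<and> (\<forall>i\<in>I. finite (L i) \<and> L i \<noteq> {}) \<and>
     (\<forall>i\<in>I. \<forall>y\<in>L i. convex (Y y) \<and> Y y \<subseteq> S) \<and> affine S \<and> S \<noteq> {} \<and> aff_dim S \<le> int e \<and>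
     (proper \<longrightarrow> e + 3 \<le> card I \<and> (\<forall>i\<in>I. \<exists>y. L i = {y})) \<and>
     (\<not> proper \<longrightarrow> e + 2 \<le> card I \<and> (\<forall>i\<in>I. \<Inter>(Y ` L i) = {}))"

definition key_point :: "('l \<Rightarrow> 'a::euclidean_space set) \<Rightarrow> 'a \<Rightarrow> ('i \<Rightarrow> 'l option) \<Rightarrow> 'a" where
  "key_point Y c f = closest_point (sel_Inter Y f) c"

definition key_points :: "'i set \<Rightarrow> ('i \<Rightarrow> 'l set) \<Rightarrow> ('l \<Rightarrow> 'a::euclidean_space set) \<Rightarrow> 'a \<Rightarrow> 'a set" where
  "key_points I L Y c = {key_point Y c f | f. partial_sel I L f \<and> sel_Inter Y f \<noteq> {}}"

definition swept ::
  "'i set \<Rightarrow> ('i \<Rightarrow> 'l set) \<Rightarrow> ('l \<Rightarrow> 'a::euclidean_space set) \<Rightarrow> 'a \<Rightarrow> 'a set \<Rightarrow> ('i \<Rightarrow> 'l option) set" where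
  "swept I L Y c K = {f. partial_sel I L f \<and> sel_Inter Y f \<noteq> {} \<and> key_point Y c f \<in> K}"

definition unswept :: "'i set \<Rightarrow> ('i \<Rightarrow> 'l set) \<Rightarrow> ('l \<Rightarrow> 'a::euclidean_space set) \<Rightarrow> bool \<Rightarrow> 'a \<Rightarrow>
    'a set \<Rightarrow> ('i \<Rightarrow> 'l option) set" where
  "unswept I L Y proper c K = {f. admissible I L proper f \<and> f \<notin> swept I L Y c K}"

definition downclosed_keys ::
  "'i set \<Rightarrow> ('i \<Rightarrow> 'l set) \<Rightarrow> ('l \<Rightarrow> 'a::euclidean_space set) \<Rightarrow> 'a \<Rightarrow> 'a set \<Rightarrow> bool" where
  "downclosed_keys I L Y c K \<longleftrightarrow>
     (\<forall>q\<in>K. \<forall>q'\<in>key_points I L Y c. dist c q' < dist c q \<longrightarrow> q' \<in> K)"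

locale sweep_step =
  fixes I :: "'i set" and L :: "'i \<Rightarrow> 'l set" and Y :: "'l \<Rightarrow> 'a::euclidean_space set"
    and proper :: bool and S :: "'a set" and e :: nat and c :: 'a and K :: "'a set" and q :: 'a
  assumes setting: "conn_setting I L Y proper S e"
    and compact_labels: "\<forall>i\<in>I. \<forall>y\<in>L i. compact (Y y)"
    and centre: "c \<in> S"
    and K_downclosed: "downclosed_keys I L Y c K"
    and q_in_K: "q \<in> K" and q_farthest: "\<forall>q'\<in>K. dist c q' \<le> dist c q"
begin

abbreviation "r \<equiv> dist c q"
abbreviation "through_q f \<equiv> \<forall>y\<in>ran f. q \<in> Y y"
abbreviation "blocking f \<equiv> sel_Inter Y f \<inter> ball c r = {}"
abbreviation "P \<equiv> unswept I L Y proper c K"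
abbreviation "P' \<equiv> unswept I L Y proper c (K - {q})"
abbreviation "reach \<equiv> (comparable_in P)\<^sup>*\<^sup>*"

lemma finite_I: "finite I"
  and affine_S: "affine S"
  and aff_dim_S: "aff_dim S \<le> int e"
  and proper_card: "proper \<Longrightarrow> e + 3 \<le> card I"
  and proper_singleton: "proper \<Longrightarrow> i \<in> I \<Longrightarrow> \<exists>y. L i = {y}"
  and nonproper_card: "\<not> proper \<Longrightarrow> e + 2 \<le> card I"
  and nonproper_empty: "\<not> proper \<Longrightarrow> i \<in> I \<Longrightarrow> \<Inter>(Y ` L i) = {}"
  using setting unfolding conn_setting_def by auto

lemma label_set_props:
  assumes "partial_sel I L f" "y \<in> ran f"
  shows "convex (Y y)" "compact (Y y)" "Y y \<subseteq> S"
proof -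
  obtain i where "i \<in> I" "y \<in> L i"
    using assms by (rule partial_sel_ranE)
  then show "convex (Y y)" "compact (Y y)" "Y y \<subseteq> S"
    using setting compact_labels unfolding conn_setting_def by auto
qed

lemma finite_dom: "partial_sel I L f \<Longrightarrow> finite (dom f)"
  using finite_dom_partial_sel finite_I by blast

lemma closed_sel_Inter: "partial_sel I L f \<Longrightarrow> closed (sel_Inter Y f)"
  unfolding sel_Inter_def using label_set_props(2) compact_imp_closed by blast

lemma convex_sel_Inter: "partial_sel I L f \<Longrightarrow> convex (sel_Inter Y f)"
  unfolding sel_Inter_def by (rule convex_Inter) (use label_set_props(1) in blast)

lemma key_point_in: "partial_sel I L f \<Longrightarrow> sel_Inter Y f \<noteq> {} \<Longrightarrow> key_point Y c f \<in> sel_Inter Y f"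
  unfolding key_point_def by (rule closest_point_in_set) (use closed_sel_Inter in auto)

lemma key_point_le: "partial_sel I L f \<Longrightarrow> z \<in> sel_Inter Y f \<Longrightarrow> dist c (key_point Y c f) \<le> dist c z"
  unfolding key_point_def by (rule closest_point_le) (use closed_sel_Inter in auto)

lemma key_point_unique:
  "partial_sel I L f \<Longrightarrow> x \<in> sel_Inter Y f \<Longrightarrow> \<forall>z\<in>sel_Inter Y f. dist c x \<le> dist c z \<Longrightarrow>
    key_point Y c f = x"
  unfolding key_point_def
  by (rule closest_point_unique[symmetric]) (use closed_sel_Inter convex_sel_Inter in auto)

lemma q_in_sel_Inter: "through_q f \<Longrightarrow> q \<in> sel_Inter Y f"
  unfolding sel_Inter_def by blast

lemma dist_key_point_le: "f \<in> swept I L Y c K \<Longrightarrow> dist c (key_point Y c f) \<le> r"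
  unfolding swept_def using q_farthest by blast

lemma blocking_far: "blocking f \<Longrightarrow> z \<in> sel_Inter Y f \<Longrightarrow> r \<le> dist c z"
  by (metis disjoint_iff mem_ball not_le)

lemma swept_at_q_iff:
  assumes "partial_sel I L f"
  shows "f \<in> swept I L Y c K \<and> f \<notin> swept I L Y c (K - {q}) \<longleftrightarrow> through_q f \<and> blocking f"
proof
  assume "f \<in> swept I L Y c K \<and> f \<notin> swept I L Y c (K - {q})"
  then have key: "key_point Y c f = q" and ne: "sel_Inter Y f \<noteq> {}"
    unfolding swept_def using assms by auto
  then have "q \<in> sel_Inter Y f"
    using key_point_in[OF assms ne] by simp
  moreover have "blocking f"
    using key_point_le[OF assms] key by (force simp: mem_ball)
  ultimately show "through_q f \<and> blocking f"
    unfolding sel_Inter_def by blast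
next
  assume "through_q f \<and> blocking f"
  then have "q \<in> sel_Inter Y f" "key_point Y c f = q"
    using q_in_sel_Inter key_point_unique[OF assms] blocking_far by blast+
  then show "f \<in> swept I L Y c K \<and> f \<notin> swept I L Y c (K - {q})"
    unfolding swept_def using assms q_in_K by auto
qed

lemma not_swept_above_blocking:
  assumes "partial_sel I L f" "\<beta> \<subseteq>\<^sub>m f" "through_q \<beta>" "blocking \<beta>" "\<not> through_q f"
  shows "f \<notin> swept I L Y c K"
proof
  assume f_swept: "f \<in> swept I L Y c K"
  then have ne: "sel_Inter Y f \<noteq> {}"
    unfolding swept_def by simp
  let ?k = "key_point Y c f"
  have \<beta>: "partial_sel I L \<beta>"
    using partial_sel_map_le assms(1,2) by blast
  have k_f: "?k \<in> sel_Inter Y f"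
    using key_point_in[OF assms(1) ne] .
  have k_\<beta>: "?k \<in> sel_Inter Y \<beta>"
    using sel_Inter_antimono[OF assms(2)] k_f by (rule subsetD)
  have "dist c ?k = r"
    using blocking_far[OF assms(4) k_\<beta>] dist_key_point_le[OF f_swept] by simp
  then have "key_point Y c \<beta> = ?k"
    using key_point_unique[OF \<beta> k_\<beta>] blocking_far[OF assms(4)] by simp
  moreover have "key_point Y c \<beta> = q"
    using key_point_unique[OF \<beta> q_in_sel_Inter[OF assms(3)]] blocking_far[OF assms(4)] by simp
  ultimately have "q \<in> sel_Inter Y f"
    using k_f by simp
  then show False
    using assms(5) unfolding sel_Inter_def by blast
qed

lemma swept_map_le:
  assumes "g \<in> swept I L Y c K" "f \<subseteq>\<^sub>m g"
  shows "f \<in> swept I L Y c K"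
proof -
  have g: "partial_sel I L g" "sel_Inter Y g \<noteq> {}" "key_point Y c g \<in> K"
    using assms(1) unfolding swept_def by auto
  have f: "partial_sel I L f"
    using partial_sel_map_le[OF g(1) assms(2)] .
  have kg: "key_point Y c g \<in> sel_Inter Y f"
    using sel_Inter_antimono[OF assms(2)] key_point_in[OF g(1,2)] by (rule subsetD)
  then have ne: "sel_Inter Y f \<noteq> {}"
    by blast
  have le: "dist c (key_point Y c f) \<le> dist c (key_point Y c g)"
    using key_point_le[OF f kg] .
  have "key_point Y c f \<in> K"
  proof (cases "dist c (key_point Y c f) < dist c (key_point Y c g)")
    case True
    have "key_point Y c f \<in> key_points I L Y c"
      unfolding key_points_def using f ne by blast
    then show ?thesis
      using K_downclosed True g(3) unfolding downclosed_keys_def by blast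
  next
    case False
    then have "\<forall>z\<in>sel_Inter Y f. dist c (key_point Y c g) \<le> dist c z"
      using key_point_le[OF f] le by force
    then have "key_point Y c f = key_point Y c g"
      using key_point_unique[OF f kg] by simp
    then show ?thesis
      using g(3) by simp
  qed
  then show ?thesis
    unfolding swept_def using f ne by simp
qed

lemma blocking_small_subface:
  assumes f: "partial_sel I L f" "through_q f" "blocking f"
  shows "\<exists>\<sigma>. \<sigma> \<subseteq>\<^sub>m f \<and> blocking \<sigma> \<and> card (dom \<sigma>) \<le> e"
proof -
  let ?Z = "\<lambda>i. Y (the (f i))"
  have Z_props: "\<forall>i\<in>dom f. convex (?Z i) \<and> ?Z i \<subseteq> S"
  proof
    fix i assume "i \<in> dom f"
    then have "the (f i) \<in> ran f"
      by (auto intro: ranI)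
    then show "convex (?Z i) \<and> ?Z i \<subseteq> S"
      using label_set_props[OF f(1)] by blast
  qed
  have "f |` dom f = f"
    by (rule ext) (auto simp: restrict_map_def domIff)
  then have Inter_f: "(\<Inter>i\<in>dom f. ?Z i) = sel_Inter Y f"
    using sel_Inter_restrict[of "dom f" f Y] by simp
  have ball_S: "convex (ball c r \<inter> S)" "ball c r \<inter> S \<subseteq> S"
    using affine_S by (simp_all add: affine_imp_convex convex_Int)
  have "(\<Inter>i\<in>dom f. ?Z i) \<noteq> {}"
    using Inter_f q_in_sel_Inter[OF f(2)] by auto
  moreover have "(\<Inter>i\<in>dom f. ?Z i) \<inter> (ball c r \<inter> S) = {}"
    using Inter_f f(3) by auto
  ultimately obtain J where J: "J \<subseteq> dom f" "card J \<le> e" "(\<Inter>i\<in>J. ?Z i) \<inter> (ball c r \<inter> S) = {}"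
    using Helly_affine_avoiding[OF finite_dom[OF f(1)] aff_dim_S Z_props ball_S] by blast
  have "blocking (f |` J)"
  proof (cases "J = {}")
    case True
    then have "ball c r \<inter> S = {}"
      using J(3) by simp
    then have "c \<notin> ball c r"
      using centre by blast
    then have "ball c r = {}"
      by (simp add: ball_eq_empty)
    then show ?thesis by simp
  next
    case False
    then have "(\<Inter>i\<in>J. ?Z i) \<subseteq> S"
      using J(1) Z_props by blast
    then show ?thesis
      using J(3) sel_Inter_restrict[OF J(1), of Y] by blast
  qed
  moreover have "f |` J \<subseteq>\<^sub>m f" "dom (f |` J) = J"
    using J(1) by (auto simp: map_le_def)
  ultimately show ?thesis
    using J(2) by metis
qed

lemma unswept_above_blocking:
  assumes "admissible I L proper g" "\<beta> \<subseteq>\<^sub>m g" "through_q \<beta>" "blocking \<beta>" "\<not> through_q g"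
  shows "g \<in> P"
  using assms not_swept_above_blocking unfolding unswept_def admissible_def by blast

lemma unswept_above_blockingE:
  assumes "f \<in> P" "\<beta> \<subseteq>\<^sub>m f" "through_q \<beta>" "blocking \<beta>"
  obtains i y where "f i = Some y" "q \<notin> Y y" "i \<in> I" "y \<in> L i" "i \<notin> dom \<beta>"
proof -
  have f: "partial_sel I L f" "f \<notin> swept I L Y c K"
    using assms(1) unfolding unswept_def admissible_def by auto
  have "\<not> through_q f"
  proof
    assume "through_q f"
    moreover have "blocking f"
      using assms(4) sel_Inter_antimono[OF assms(2), of Y] by blast
    ultimately show False
      using swept_at_q_iff[OF f(1)] f(2) by blast
  qed
  then obtain y where y: "y \<in> ran f" "q \<notin> Y y"
    by blast
  then obtain i where i: "i \<in> I" "f i = Some y" "y \<in> L i"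
    using f(1) by (blast elim: partial_sel_ranE)
  have "i \<notin> dom \<beta>"
  proof
    assume "i \<in> dom \<beta>"
    then obtain y' where "\<beta> i = Some y'"
      by blast
    with assms(2) i(2) have "\<beta> i = Some y"
      using map_le_SomeD by fastforce
    then show False
      using assms(3) y(2) by (auto intro: ranI)
  qed
  then show ?thesis
    using that i y by blast
qed

lemma upd_avoiding_unswept:
  assumes "partial_sel I L \<sigma>" "through_q \<sigma>" "blocking \<sigma>" "card (dom \<sigma>) \<le> e"
    and "i \<in> I" "i \<notin> dom \<sigma>" "y \<in> L i" "q \<notin> Y y"
  shows "\<sigma>(i \<mapsto> y) \<in> P"
proof (rule unswept_above_blocking[OF _ map_le_upd_new[OF assms(6)] assms(2,3)])
  have "card (dom (\<sigma>(i \<mapsto> y))) = card (dom \<sigma>) + 1"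
    using finite_dom[OF assms(1)] assms(6) by simp
  then have "card (dom (\<sigma>(i \<mapsto> y))) \<noteq> card I" if proper
    using proper_card[OF that] assms(4) by linarith
  then show "admissible I L proper (\<sigma>(i \<mapsto> y))"
    unfolding admissible_def using partial_sel_upd[OF assms(1,5,7)] by auto
  show "\<not> through_q (\<sigma>(i \<mapsto> y))"
    using assms(6,8) by (auto simp: domIff)
qed

lemma label_avoiding_q:
  assumes "\<not> proper" "i \<in> I"
  obtains y where "y \<in> L i" "q \<notin> Y y"
  using nonproper_empty[OF assms] by blast

text \<open>
  Two unswept faces above a small blocking face \<open>\<sigma>\<close> contain one-label extensions
  \<open>\<sigma>(i \<mapsto> y)\<close> with \<open>q \<notin> Y y\<close>, and any two of these are joined through
  \<open>\<sigma>(i \<mapsto> y, i' \<mapsto> y')\<close>, which stays admissible since \<open>\<sigma>\<close> has at most \<open>e\<close> colours.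
\<close>

lemma reach_upd_upd_distinct:
  assumes \<sigma>: "partial_sel I L \<sigma>" "through_q \<sigma>" "blocking \<sigma>" "card (dom \<sigma>) \<le> e"
    and iy: "i \<in> I" "i \<notin> dom \<sigma>" "y \<in> L i" "q \<notin> Y y"
    and iy': "i' \<in> I" "i' \<notin> dom \<sigma>" "y' \<in> L i'" "q \<notin> Y y'" and "i \<noteq> i'"
  shows "reach (\<sigma>(i \<mapsto> y)) (\<sigma>(i' \<mapsto> y'))"
proof -
  let ?g = "\<sigma>(i \<mapsto> y, i' \<mapsto> y')"
  have le: "\<sigma>(i \<mapsto> y) \<subseteq>\<^sub>m ?g" "\<sigma>(i' \<mapsto> y') \<subseteq>\<^sub>m ?g"
    using iy(2) iy'(2) \<open>i \<noteq> i'\<close> by (auto simp: map_le_def)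
  have "card (dom ?g) = card (dom \<sigma>) + 2"
    using finite_dom[OF \<sigma>(1)] iy(2) iy'(2) \<open>i \<noteq> i'\<close> by simp
  then have "card (dom ?g) \<noteq> card I" if proper
    using proper_card[OF that] \<sigma>(4) by linarith
  then have "admissible I L proper ?g"
    unfolding admissible_def using partial_sel_upd[OF partial_sel_upd[OF \<sigma>(1) iy(1,3)] iy'(1,3)] by auto
  moreover have "\<sigma> \<subseteq>\<^sub>m ?g"
    using iy(2) iy'(2) by (auto simp: map_le_def)
  moreover have "y' \<in> ran ?g"
    by (auto intro: ranI)
  then have "\<not> through_q ?g"
    using iy'(4) by blast
  ultimately have g: "?g \<in> P"
    using unswept_above_blocking \<sigma>(2,3) by blast
  have "reach (\<sigma>(i \<mapsto> y)) ?g"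
    using comparable_in_map_le(1)[OF upd_avoiding_unswept[OF \<sigma> iy] g le(1)] .
  also have "reach ?g (\<sigma>(i' \<mapsto> y'))"
    using comparable_in_map_le(2)[OF g upd_avoiding_unswept[OF \<sigma> iy'] le(2)] .
  finally show ?thesis .
qed

lemma reach_upd_upd:
  assumes \<sigma>: "partial_sel I L \<sigma>" "through_q \<sigma>" "blocking \<sigma>" "card (dom \<sigma>) \<le> e"
    and iy: "i \<in> I" "i \<notin> dom \<sigma>" "y \<in> L i" "q \<notin> Y y"
    and iy': "i' \<in> I" "i' \<notin> dom \<sigma>" "y' \<in> L i'" "q \<notin> Y y'"
  shows "reach (\<sigma>(i \<mapsto> y)) (\<sigma>(i' \<mapsto> y'))"
proof (cases "i = i' \<and> y \<noteq> y'")
  case False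
  then show ?thesis
    using reach_upd_upd_distinct[OF \<sigma> iy iy'] by auto
next
  case True
  \<comment> \<open>two labels of one colour: pass through a third colour, which exists as \<open>card I \<ge> e + 2\<close>\<close>
  have "\<not> proper"
  proof
    assume proper
    then obtain y0 where "L i = {y0}"
      using proper_singleton iy(1) by blast
    then show False
      using iy(3) iy'(3) True by simp
  qed
  have "card (insert i (dom \<sigma>)) < card I"
    using finite_dom[OF \<sigma>(1)] \<sigma>(4) nonproper_card[OF \<open>\<not> proper\<close>] by (simp add: card_insert_if)
  moreover have "finite (insert i (dom \<sigma>))"
    using finite_dom[OF \<sigma>(1)] by simp
  ultimately have "\<not> I \<subseteq> insert i (dom \<sigma>)"
    using card_mono not_le by blast
  then obtain j where j: "j \<in> I" "j \<noteq> i" "j \<notin> dom \<sigma>"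
    by blast
  obtain z where z: "z \<in> L j" "q \<notin> Y z"
    using label_avoiding_q[OF \<open>\<not> proper\<close> j(1)] .
  have "reach (\<sigma>(i \<mapsto> y)) (\<sigma>(j \<mapsto> z))"
    using reach_upd_upd_distinct[OF \<sigma> iy j(1,3) z] j(2) by simp
  moreover have "reach (\<sigma>(j \<mapsto> z)) (\<sigma>(i' \<mapsto> y'))"
    using reach_upd_upd_distinct[OF \<sigma> j(1,3) z iy'] j(2) True by simp
  ultimately show ?thesis
    by (rule rtranclp_trans)
qed

lemma reach_above_small_blocking:
  assumes \<sigma>: "partial_sel I L \<sigma>" "through_q \<sigma>" "blocking \<sigma>" "card (dom \<sigma>) \<le> e"
    and "f1 \<in> P" "f2 \<in> P" "\<sigma> \<subseteq>\<^sub>m f1" "\<sigma> \<subseteq>\<^sub>m f2"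
  shows "reach f1 f2"
proof -
  obtain i y where iy: "f1 i = Some y" "q \<notin> Y y" "i \<in> I" "y \<in> L i" "i \<notin> dom \<sigma>"
    using unswept_above_blockingE[OF assms(5,7) \<sigma>(2,3)] .
  obtain i' y' where iy': "f2 i' = Some y'" "q \<notin> Y y'" "i' \<in> I" "y' \<in> L i'" "i' \<notin> dom \<sigma>"
    using unswept_above_blockingE[OF assms(6,8) \<sigma>(2,3)] .
  have le: "\<sigma>(i \<mapsto> y) \<subseteq>\<^sub>m f1" "\<sigma>(i' \<mapsto> y') \<subseteq>\<^sub>m f2"
    using assms(7,8) iy(1,5) iy'(1,5) unfolding map_le_def by auto
  have upd: "\<sigma>(i \<mapsto> y) \<in> P" "\<sigma>(i' \<mapsto> y') \<in> P"
    using upd_avoiding_unswept[OF \<sigma> iy(3,5,4,2)] upd_avoiding_unswept[OF \<sigma> iy'(3,5,4,2)] .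
  have "reach f1 (\<sigma>(i \<mapsto> y))"
    using comparable_in_map_le(2)[OF assms(5) upd(1) le(1)] .
  also have "reach (\<sigma>(i \<mapsto> y)) (\<sigma>(i' \<mapsto> y'))"
    using reach_upd_upd[OF \<sigma> iy(3,5,4,2) iy'(3,5,4,2)] .
  also have "reach (\<sigma>(i' \<mapsto> y')) f2"
    using comparable_in_map_le(1)[OF upd(2) assms(6) le(2)] .
  finally show ?thesis .
qed

lemma reach_above_blocking:
  assumes \<beta>: "partial_sel I L \<beta>" "through_q \<beta>" "blocking \<beta>"
    and "f1 \<in> P" "f2 \<in> P" "\<beta> \<subseteq>\<^sub>m f1" "\<beta> \<subseteq>\<^sub>m f2"
  shows "reach f1 f2"
proof -
  obtain \<sigma> where \<sigma>: "\<sigma> \<subseteq>\<^sub>m \<beta>" "blocking \<sigma>" "card (dom \<sigma>) \<le> e"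
    using blocking_small_subface[OF \<beta>] by blast
  have "partial_sel I L \<sigma>" "through_q \<sigma>"
    using partial_sel_map_le[OF \<beta>(1) \<sigma>(1)] \<beta>(2) ran_map_le[OF \<sigma>(1)] by blast+
  then show ?thesis
    using reach_above_small_blocking \<sigma> assms(4,5) map_le_trans[OF \<sigma>(1) assms(6)]
      map_le_trans[OF \<sigma>(1) assms(7)] by blast
qed

end

section \<open>Directions at a point\<close>

text \<open>
  The directions, normalised by \<open>v \<bullet> w = -1\<close>, in which \<open>X\<close> extends from \<open>q\<close>. For
  \<open>w = q - c\<close> these point into the ball around \<open>c\<close> through \<open>q\<close>, so they model the link
  of \<open>q\<close> in the sweep.
\<close>

definition dir_section :: "'a::real_inner \<Rightarrow> 'a \<Rightarrow> 'a set \<Rightarrow> 'a set" where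
  "dir_section q w X = {v. v \<bullet> w = -1 \<and> (\<exists>\<epsilon>>0. q + \<epsilon> *\<^sub>R v \<in> X)}"

lemma convex_ray_shorten:
  fixes q v :: "'a::real_vector"
  assumes "convex X" "q \<in> X" "q + \<epsilon> *\<^sub>R v \<in> X" "0 < t" "t \<le> \<epsilon>"
  shows "q + t *\<^sub>R v \<in> X"
proof -
  have "(1 - t / \<epsilon>) *\<^sub>R q + (t / \<epsilon>) *\<^sub>R (q + \<epsilon> *\<^sub>R v) \<in> X"
    using assms by (intro convexD_alt) auto
  moreover have "(1 - t / \<epsilon>) *\<^sub>R q + (t / \<epsilon>) *\<^sub>R (q + \<epsilon> *\<^sub>R v) = q + t *\<^sub>R v"
    using assms(4,5) by (simp add: algebra_simps)
  ultimately show ?thesis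
    by simp
qed

lemma convex_dir_section:
  assumes "convex X" "q \<in> X"
  shows "convex (dir_section q w X)"
proof (rule convexI)
  fix x y and u v :: real
  assume "x \<in> dir_section q w X" "y \<in> dir_section q w X" and uv: "0 \<le> u" "0 \<le> v" "u + v = 1"
  then obtain \<epsilon>1 \<epsilon>2 where x: "\<epsilon>1 > 0" "q + \<epsilon>1 *\<^sub>R x \<in> X" "x \<bullet> w = -1"
    and y: "\<epsilon>2 > 0" "q + \<epsilon>2 *\<^sub>R y \<in> X" "y \<bullet> w = -1"
    unfolding dir_section_def by blast
  let ?\<epsilon> = "min \<epsilon>1 \<epsilon>2"
  have "q + ?\<epsilon> *\<^sub>R x \<in> X" "q + ?\<epsilon> *\<^sub>R y \<in> X"
    using convex_ray_shorten[OF assms] x y by auto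
  then have "u *\<^sub>R (q + ?\<epsilon> *\<^sub>R x) + v *\<^sub>R (q + ?\<epsilon> *\<^sub>R y) \<in> X"
    using convexD[OF assms(1) _ _ uv] by blast
  moreover have "u *\<^sub>R (q + ?\<epsilon> *\<^sub>R x) + v *\<^sub>R (q + ?\<epsilon> *\<^sub>R y) =
      (u + v) *\<^sub>R q + ?\<epsilon> *\<^sub>R (u *\<^sub>R x + v *\<^sub>R y)"
    by (simp add: algebra_simps)
  then have "u *\<^sub>R (q + ?\<epsilon> *\<^sub>R x) + v *\<^sub>R (q + ?\<epsilon> *\<^sub>R y) = q + ?\<epsilon> *\<^sub>R (u *\<^sub>R x + v *\<^sub>R y)"
    using uv(3) by simp
  ultimately have "q + ?\<epsilon> *\<^sub>R (u *\<^sub>R x + v *\<^sub>R y) \<in> X"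
    by simp
  moreover have "(u *\<^sub>R x + v *\<^sub>R y) \<bullet> w = -1"
    using x(3) y(3) uv(3) by (simp add: inner_add_left algebra_simps)
  ultimately show "u *\<^sub>R x + v *\<^sub>R y \<in> dir_section q w X"
    unfolding dir_section_def using x(1) y(1) by (auto intro!: exI[of _ ?\<epsilon>])
qed

lemma dir_section_subset:
  assumes "affine S" "q \<in> S" "X \<subseteq> S"
  shows "dir_section q w X \<subseteq> {v. w \<bullet> v = -1} \<inter> (+) (-q) ` S"
proof
  fix v assume "v \<in> dir_section q w X"
  then obtain \<epsilon> where \<epsilon>: "\<epsilon> > 0" "q + \<epsilon> *\<^sub>R v \<in> X" "v \<bullet> w = -1"
    unfolding dir_section_def by blast
  \<comment> \<open>\<open>q + v\<close> lies on the line through \<open>q\<close> and \<open>q + \<epsilon> v\<close>\<close>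
  have "(1 - 1/\<epsilon>) *\<^sub>R q + (1/\<epsilon>) *\<^sub>R (q + \<epsilon> *\<^sub>R v) \<in> S"
    using assms \<epsilon>(2) unfolding affine_alt by blast
  moreover have "(1 - 1/\<epsilon>) *\<^sub>R q + (1/\<epsilon>) *\<^sub>R (q + \<epsilon> *\<^sub>R v) = q + v"
    using \<epsilon>(1) by (simp add: algebra_simps)
  ultimately have "v \<in> (+) (-q) ` S"
    by (metis add_minus_cancel image_eqI)
  then show "v \<in> {v. w \<bullet> v = -1} \<inter> (+) (-q) ` S"
    using \<epsilon>(3) by (simp add: inner_commute)
qed

lemma dist_sq_along:
  fixes q c v :: "'a::real_inner"
  shows "(dist c (q + t *\<^sub>R v))\<^sup>2 = (dist c q)\<^sup>2 + 2 * t * (v \<bullet> (q - c)) + t\<^sup>2 * (norm v)\<^sup>2"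
proof -
  have "dist c (q + t *\<^sub>R v) = norm ((q - c) + t *\<^sub>R v)" "dist c q = norm (q - c)"
    by (simp_all add: dist_norm norm_minus_commute algebra_simps)
  moreover have "(norm ((q - c) + t *\<^sub>R v))\<^sup>2 =
      (norm (q - c))\<^sup>2 + 2 * t * (v \<bullet> (q - c)) + t\<^sup>2 * (norm v)\<^sup>2"
    unfolding power2_norm_eq_inner
    by (simp add: inner_add_left inner_add_right inner_commute power2_eq_square algebra_simps)
  ultimately show ?thesis
    by simp
qed

lemma dist_decreases_along:
  fixes q c v :: "'a::real_inner"
  assumes "v \<bullet> (q - c) = -1" "0 < t" "t * (norm v)\<^sup>2 < 1"
  shows "dist c (q + t *\<^sub>R v) < dist c q"
proof -
  have "(dist c (q + t *\<^sub>R v))\<^sup>2 = (dist c q)\<^sup>2 + 2 * t * (v \<bullet> (q - c)) + t\<^sup>2 * (norm v)\<^sup>2"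
    by (rule dist_sq_along)
  also have "\<dots> = (dist c q)\<^sup>2 - t * (2 - t * (norm v)\<^sup>2)"
    unfolding assms(1) by (simp add: power2_eq_square algebra_simps)
  also have "\<dots> < (dist c q)\<^sup>2"
    using assms(2,3) by simp
  finally show ?thesis
    by (simp add: power2_less_imp_less)
qed

lemma dir_section_Inter_nonempty:
  fixes q c :: "'a::real_inner"
  assumes "\<forall>X\<in>T. q \<in> X" "\<Inter>T \<inter> ball c (dist c q) \<noteq> {}"
  shows "(\<Inter>X\<in>T. dir_section q (q - c) X) \<noteq> {}"
proof -
  obtain z where z: "z \<in> \<Inter>T" "dist c z < dist c q"
    using assms(2) by auto
  let ?t = "- ((z - q) \<bullet> (q - c))"
  have "(dist c z)\<^sup>2 < (dist c q)\<^sup>2"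
    using z(2) by (simp add: power_strict_mono)
  moreover have "(dist c z)\<^sup>2 = (dist c q)\<^sup>2 - 2 * ?t + (norm (z - q))\<^sup>2"
    using dist_sq_along[of c q 1 "z - q"] by simp
  ultimately have t: "?t > 0"
    by (smt (verit) zero_le_power2)
  define v where "v = (1 / ?t) *\<^sub>R (z - q)"
  have v: "v \<bullet> (q - c) = -1" "q + ?t *\<^sub>R v = z"
    unfolding v_def using t by simp_all
  have "v \<in> dir_section q (q - c) X" if "X \<in> T" for X
  proof -
    have "q + ?t *\<^sub>R v \<in> X"
      using v(2) z(1) that by simp
    then show ?thesis
      unfolding dir_section_def using v(1) t by blast
  qed
  then show ?thesis
    by blast
qed

lemma dir_section_Inter_empty:
  fixes q c :: "'a::real_inner"
  assumes "finite T" "\<forall>X\<in>T. convex X \<and> q \<in> X" "T \<noteq> {}" "\<Inter>T \<inter> ball c (dist c q) = {}"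
  shows "(\<Inter>X\<in>T. dir_section q (q - c) X) = {}"
proof (rule ccontr)
  assume "(\<Inter>X\<in>T. dir_section q (q - c) X) \<noteq> {}"
  then obtain v where v: "\<And>X. X \<in> T \<Longrightarrow> v \<in> dir_section q (q - c) X"
    by blast
  then have vw: "v \<bullet> (q - c) = -1"
    using assms(3) unfolding dir_section_def by auto
  have "\<forall>X\<in>T. \<exists>\<epsilon>>0. q + \<epsilon> *\<^sub>R v \<in> X"
    using v unfolding dir_section_def by blast
  then obtain \<epsilon> where \<epsilon>: "\<And>X. X \<in> T \<Longrightarrow> \<epsilon> X > 0 \<and> q + \<epsilon> X *\<^sub>R v \<in> X"
    by metis
  \<comment> \<open>a step short enough to stay in every member of \<open>T\<close> and to decrease the distance to \<open>c\<close>\<close>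
  define t where "t = Min (insert (1 / ((norm v)\<^sup>2 + 1)) (\<epsilon> ` T))"
  have pos: "(norm v)\<^sup>2 + 1 > 0"
    by (smt (verit) zero_le_power2)
  then have t_pos: "t > 0"
    unfolding t_def using assms(1) \<epsilon> by simp
  have t_le: "t \<le> \<epsilon> X" if "X \<in> T" for X
    unfolding t_def using assms(1) that by simp
  have "t \<le> 1 / ((norm v)\<^sup>2 + 1)"
    unfolding t_def using assms(1) by simp
  then have "t * ((norm v)\<^sup>2 + 1) \<le> 1"
    using pos by (simp add: le_divide_eq)
  then have "t * (norm v)\<^sup>2 < 1"
    using t_pos by (simp add: algebra_simps)
  then have "dist c (q + t *\<^sub>R v) < dist c q"
    using dist_decreases_along[OF vw t_pos] by simp
  moreover have "q + t *\<^sub>R v \<in> \<Inter>T"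
    using convex_ray_shorten \<epsilon> t_le t_pos assms(2) by blast
  ultimately show False
    using assms(4) by auto
qed

lemma dir_hyperplane_props:
  fixes q c :: "'a::euclidean_space"
  assumes "affine S" "q \<in> S" "c \<in> S" "q \<noteq> c" "aff_dim S \<le> int e"
  defines "H \<equiv> {v. (q - c) \<bullet> v = -1} \<inter> (+) (-q) ` S"
  shows "affine H" "H \<noteq> {}" "aff_dim H \<le> int (e - 1)" "e \<ge> 1"
proof -
  let ?w = "q - c" and ?T = "(+) (-q) ` S"
  have aT: "affine ?T"
    using assms(1) affine_translation by blast
  then show "affine H"
    unfolding H_def by (simp add: affine_Int affine_hyperplane)
  have ww: "?w \<bullet> ?w > 0"
    using assms(4) by simp
  \<comment> \<open>the point of \<open>H\<close> pointing straight at \<open>c\<close>\<close>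
  define v0 where "v0 = (- (1 / (?w \<bullet> ?w))) *\<^sub>R ?w"
  have "(1 - 1 / (?w \<bullet> ?w)) *\<^sub>R q + (1 / (?w \<bullet> ?w)) *\<^sub>R c \<in> S"
    using assms(1-3) unfolding affine_alt by blast
  moreover have "(1 - 1 / (?w \<bullet> ?w)) *\<^sub>R q + (1 / (?w \<bullet> ?w)) *\<^sub>R c = q + v0"
    unfolding v0_def by (simp add: algebra_simps)
  ultimately have "v0 \<in> ?T"
    by (metis add_minus_cancel image_eqI)
  moreover have "?w \<bullet> v0 = -1"
    unfolding v0_def using ww by simp
  ultimately show ne: "H \<noteq> {}"
    unfolding H_def by blast
  have "0 \<in> ?T"
    using assms(2) by (metis add.left_inverse image_eqI)
  then have "\<not> ?T \<subseteq> {v. ?w \<bullet> v = -1}"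
    by auto
  then have "aff_dim H = aff_dim ?T - 1"
    using aff_dim_affine_Int_hyperplane[OF aT, of ?w "-1"] ne unfolding H_def
    by (auto simp: Int_commute)
  moreover have "aff_dim ?T = aff_dim S"
    by (rule aff_dim_translation_eq)
  moreover have "aff_dim {q, c} \<le> aff_dim S"
    using assms(2,3) by (intro aff_dim_subset) auto
  ultimately show "e \<ge> 1" "aff_dim H \<le> int (e - 1)"
    using assms(4,5) by auto
qed

section \<open>The link of a swept face\<close>

definition link_sels :: "('l \<Rightarrow> 'a::real_inner set) \<Rightarrow> 'a \<Rightarrow> 'a \<Rightarrow> ('i \<Rightarrow> 'l option) \<Rightarrow>
    ('i \<Rightarrow> 'l option) set" where
  "link_sels Y q c \<rho> = empty_sels (dom \<rho>) (\<lambda>i. {the (\<rho> i)}) (\<lambda>y. dir_section q (q - c) (Y y)) True"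

lemma partial_sel_below_iff: "partial_sel (dom \<rho>) (\<lambda>i. {the (\<rho> i)}) g \<longleftrightarrow> g \<subseteq>\<^sub>m \<rho>"
  unfolding partial_sel_def map_le_def by (force simp: dom_def)

context sweep_step
begin

lemma link_sels_iff:
  assumes "partial_sel I L \<rho>" "through_q \<rho>" "q \<noteq> c"
  shows "g \<in> link_sels Y q c \<rho> \<longleftrightarrow> g \<subseteq>\<^sub>m \<rho> \<and> dom g \<noteq> dom \<rho> \<and> blocking g"
proof -
  have "sel_Inter (\<lambda>y. dir_section q (q - c) (Y y)) g = {} \<longleftrightarrow> blocking g" if g: "g \<subseteq>\<^sub>m \<rho>"
  proof -
    have sets: "\<forall>X\<in>Y ` ran g. convex X \<and> q \<in> X"
      using label_set_props(1) partial_sel_map_le[OF assms(1) g] assms(2) ran_map_le[OF g] by blast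
    have fin: "finite (Y ` ran g)"
      using finite_dom[OF partial_sel_map_le[OF assms(1) g]] by (simp add: finite_ran)
    have r_pos: "ball c r \<noteq> {}"
      using assms(3) by simp
    show ?thesis
    proof (cases "ran g = {}")
      case True
      then show ?thesis
        using r_pos unfolding sel_Inter_def by simp
    next
      case False
      have q_all: "\<forall>X\<in>Y ` ran g. q \<in> X"
        using sets by blast
      have "(\<Inter>X\<in>Y ` ran g. dir_section q (q - c) X) = {} \<longleftrightarrow> \<Inter>(Y ` ran g) \<inter> ball c r = {}"
      proof
        assume "(\<Inter>X\<in>Y ` ran g. dir_section q (q - c) X) = {}"
        then show "\<Inter>(Y ` ran g) \<inter> ball c r = {}"
          using dir_section_Inter_nonempty[OF q_all] by blast
      next
        assume "\<Inter>(Y ` ran g) \<inter> ball c r = {}"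
        then show "(\<Inter>X\<in>Y ` ran g. dir_section q (q - c) X) = {}"
          by (intro dir_section_Inter_empty[OF fin sets]) (use False in auto)
      qed
      then show ?thesis
        unfolding sel_Inter_def by (simp add: image_image)
    qed
  qed
  then show ?thesis
    unfolding link_sels_def empty_sels_def admissible_def partial_sel_below_iff by blast
qed

lemma conn_setting_link:
  assumes "partial_sel I L \<rho>" "through_q \<rho>" "q \<noteq> c" "e + 2 \<le> card (dom \<rho>)"
  shows "e \<ge> 1"
    and "\<exists>S'. conn_setting (dom \<rho>) (\<lambda>i. {the (\<rho> i)}) (\<lambda>y. dir_section q (q - c) (Y y)) True S' (e - 1)"
proof -
  have "dom \<rho> \<noteq> {}"
    using assms(4) by auto
  then obtain i where "i \<in> dom \<rho>"
    by blast
  then obtain y where y: "y \<in> ran \<rho>"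
    by (auto intro: ranI)
  have q_S: "q \<in> S"
    using assms(2) y label_set_props(3)[OF assms(1) y] by blast
  define S' where "S' = {v. (q - c) \<bullet> v = -1} \<inter> (+) (-q) ` S"
  have S': "affine S'" "S' \<noteq> {}" "aff_dim S' \<le> int (e - 1)"
    and "e \<ge> 1"
    using dir_hyperplane_props[OF affine_S q_S centre assms(3) aff_dim_S] unfolding S'_def by auto
  then show "e \<ge> 1" by simp
  have sections: "convex (dir_section q (q - c) (Y y)) \<and> dir_section q (q - c) (Y y) \<subseteq> S'"
    if "y \<in> ran \<rho>" for y
  proof -
    have "convex (Y y)" "Y y \<subseteq> S" "q \<in> Y y"
      using label_set_props[OF assms(1) that] assms(2) that by auto
    then show ?thesis
      unfolding S'_def using convex_dir_section dir_section_subset[OF affine_S q_S] by blast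
  qed
  have "\<forall>i\<in>dom \<rho>. \<forall>y\<in>{the (\<rho> i)}. convex (dir_section q (q - c) (Y y))
      \<and> dir_section q (q - c) (Y y) \<subseteq> S'"
  proof (intro ballI)
    fix i y assume "i \<in> dom \<rho>" "y \<in> {the (\<rho> i)}"
    then have "y \<in> ran \<rho>"
      by (auto intro: ranI)
    then show "convex (dir_section q (q - c) (Y y)) \<and> dir_section q (q - c) (Y y) \<subseteq> S'"
      by (rule sections)
  qed
  then have "conn_setting (dom \<rho>) (\<lambda>i. {the (\<rho> i)}) (\<lambda>y. dir_section q (q - c) (Y y)) True S' (e - 1)"
    unfolding conn_setting_def using S' assms(4) \<open>e \<ge> 1\<close> finite_dom[OF assms(1)] by simp
  then show "\<exists>S'. conn_setting (dom \<rho>) (\<lambda>i. {the (\<rho> i)}) (\<lambda>y. dir_section q (q - c) (Y y)) True S' (e - 1)"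
    by blast
qed

end

context sweep_step
begin

abbreviation "anchored s \<beta> \<equiv> (\<forall>f\<in>P. \<beta> \<subseteq>\<^sub>m f \<longrightarrow> reach s f) \<and> (\<exists>f\<in>P. \<beta> \<subseteq>\<^sub>m f)"

lemma proper_avoider_not_in_dom:
  assumes "proper" "partial_sel I L g" "through_q g" "i \<in> I" "y \<in> L i" "q \<notin> Y y"
  shows "i \<notin> dom g"
proof
  assume "i \<in> dom g"
  then obtain y' where y': "g i = Some y'"
    by blast
  then have "y' \<in> L i"
    using assms(2) unfolding partial_sel_def by blast
  then have "y' = y"
    using proper_singleton[OF assms(1,4)] assms(5) by auto
  then show False
    using y' assms(3,6) by (auto intro: ranI)
qed

lemma unswept_upd_exists:
  assumes \<sigma>: "partial_sel I L \<sigma>" "through_q \<sigma>" "blocking \<sigma>" "card (dom \<sigma>) \<le> e"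
    and avoider: "i0 \<in> I" "y0 \<in> L i0" "q \<notin> Y y0"
  obtains i y where "i \<notin> dom \<sigma>" "\<sigma>(i \<mapsto> y) \<in> P"
proof (cases proper)
  case True
  then show ?thesis
    using that proper_avoider_not_in_dom[OF True \<sigma>(1,2) avoider]
      upd_avoiding_unswept[OF \<sigma> avoider(1) _ avoider(2,3)] by blast
next
  case False
  have "card (dom \<sigma>) < card I"
    using \<sigma>(4) nonproper_card[OF False] by linarith
  then have "\<not> I \<subseteq> dom \<sigma>"
    using card_mono[OF finite_dom[OF \<sigma>(1)]] not_le by blast
  then obtain i where i: "i \<in> I" "i \<notin> dom \<sigma>"
    by blast
  obtain y where "y \<in> L i" "q \<notin> Y y"
    using label_avoiding_q[OF False i(1)] .
  then show ?thesis
    using that upd_avoiding_unswept[OF \<sigma> i] i(2) by blast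
qed

lemma reach_above_small_from:
  assumes \<sigma>: "partial_sel I L \<sigma>" "through_q \<sigma>" "blocking \<sigma>" "card (dom \<sigma>) \<le> e"
    and g: "g \<in> P" "\<sigma> \<subseteq>\<^sub>m g" "reach s g"
  shows "\<forall>f\<in>P. \<sigma> \<subseteq>\<^sub>m f \<longrightarrow> reach s f"
  using reach_above_small_blocking[OF \<sigma> g(1) _ g(2)] rtranclp_trans[OF g(3)] by blast

lemma link_member_extension:
  assumes \<rho>: "partial_sel I L \<rho>" "through_q \<rho>"
    and g: "g \<subseteq>\<^sub>m \<rho>" "dom g \<noteq> dom \<rho>" "blocking g"
    and avoider: "i0 \<in> I" "y0 \<in> L i0" "q \<notin> Y y0"
  obtains i y where "i \<notin> dom g" "g(i \<mapsto> y) \<in> P"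
proof -
  have g_sel: "partial_sel I L g" "through_q g"
    using partial_sel_map_le[OF \<rho>(1) g(1)] \<rho>(2) ran_map_le[OF g(1)] by blast+
  have "dom g \<subseteq> dom \<rho>"
    using g(1) by (rule map_le_implies_dom_le)
  then obtain j where j: "j \<in> dom \<rho>" "j \<notin> dom g"
    using g(2) by blast
  then have "j \<in> I"
    using \<rho>(1) unfolding partial_sel_def by blast
  have "\<exists>i y. i \<notin> dom g \<and> y \<in> L i \<and> q \<notin> Y y \<and> admissible I L proper (g(i \<mapsto> y))"
  proof (cases proper)
    case True
    \<comment> \<open>all colours of \<open>\<rho>\<close> carry labels through \<open>q\<close>\<close>
    have "i0 \<notin> dom \<rho>"
      using proper_avoider_not_in_dom[OF True \<rho> avoider] .
    then have "i0 \<notin> dom g" "j \<notin> dom (g(i0 \<mapsto> y0))"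
      using j \<open>dom g \<subseteq> dom \<rho>\<close> by auto
    then show ?thesis
      unfolding admissible_def using partial_sel_upd[OF g_sel(1) avoider(1,2)] \<open>j \<in> I\<close> avoider(2,3)
      by blast
  next
    case False
    obtain z where "z \<in> L j" "q \<notin> Y z"
      using label_avoiding_q[OF False \<open>j \<in> I\<close>] .
    then show ?thesis
      unfolding admissible_def using partial_sel_upd[OF g_sel(1) \<open>j \<in> I\<close>] False j(2) by blast
  qed
  then obtain i y where iy: "i \<notin> dom g" "q \<notin> Y y" "admissible I L proper (g(i \<mapsto> y))"
    by blast
  have "\<not> through_q (g(i \<mapsto> y))"
    using iy(1,2) by (auto simp: domIff)
  then show ?thesis
    using that iy unswept_above_blocking[OF iy(3) map_le_upd_new[OF iy(1)] g_sel(2) g(3)] by blast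
qed

lemma card_dom_if_not_extendable:
  assumes \<rho>: "partial_sel I L \<rho>" "through_q \<rho>"
    and avoider: "i0 \<in> I" "y0 \<in> L i0" "q \<notin> Y y0"
    and not_ext: "\<not> (\<exists>i y. i \<in> I \<and> i \<notin> dom \<rho> \<and> y \<in> L i \<and> q \<notin> Y y \<and> admissible I L proper (\<rho>(i \<mapsto> y)))"
  shows "e + 2 \<le> card (dom \<rho>)"
proof (cases proper)
  case True
  have i0: "i0 \<notin> dom \<rho>"
    using proper_avoider_not_in_dom[OF True \<rho> avoider] .
  then have "dom (\<rho>(i0 \<mapsto> y0)) = I"
    using not_ext avoider True partial_sel_upd[OF \<rho>(1) avoider(1,2)] unfolding admissible_def by blast
  then have "card I = card (dom \<rho>) + 1"
    using card_insert_disjoint[OF finite_dom[OF \<rho>(1)] i0] by simp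
  then show ?thesis
    using proper_card[OF True] by linarith
next
  case False
  have "I \<subseteq> dom \<rho>"
  proof
    fix i assume i: "i \<in> I"
    obtain z where z: "z \<in> L i" "q \<notin> Y z"
      using label_avoiding_q[OF False i] .
    have "admissible I L proper (\<rho>(i \<mapsto> z))"
      unfolding admissible_def using partial_sel_upd[OF \<rho>(1) i z(1)] False by simp
    then show "i \<in> dom \<rho>"
      using not_ext i z by blast
  qed
  then have "dom \<rho> = I"
    using \<rho>(1) unfolding partial_sel_def by blast
  then show ?thesis
    using nonproper_card[OF False] by simp
qed

lemma reach_transport_down:
  assumes \<rho>: "partial_sel I L \<rho>" "through_q \<rho>"
    and avoider: "i0 \<in> I" "y0 \<in> L i0" "q \<notin> Y y0"
    and g: "g \<subseteq>\<^sub>m \<rho>" "dom g \<noteq> dom \<rho>" "blocking g" and g': "g' \<subseteq>\<^sub>m g" "blocking g'"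
    and reach_g: "\<forall>f\<in>P. g \<subseteq>\<^sub>m f \<longrightarrow> reach s f"
  shows "\<forall>f\<in>P. g' \<subseteq>\<^sub>m f \<longrightarrow> reach s f"
proof (intro ballI impI)
  fix f assume f: "f \<in> P" "g' \<subseteq>\<^sub>m f"
  obtain i y where iy: "i \<notin> dom g" "g(i \<mapsto> y) \<in> P"
    using link_member_extension[OF \<rho> g avoider] .
  have g'_sel: "partial_sel I L g'" "through_q g'"
    using partial_sel_map_le[OF \<rho>(1) map_le_trans[OF g'(1) g(1)]] \<rho>(2)
      ran_map_le[OF map_le_trans[OF g'(1) g(1)]] by blast+
  have "reach s (g(i \<mapsto> y))"
    using reach_g iy(2) map_le_upd_new[OF iy(1)] by blast
  moreover have "reach (g(i \<mapsto> y)) f"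
    using reach_above_blocking[OF g'_sel g'(2) iy(2) f(1) map_le_trans[OF g'(1) map_le_upd_new[OF iy(1)]] f(2)] .
  ultimately show "reach s f"
    by (rule rtranclp_trans)
qed

lemma reach_along_link:
  assumes \<rho>: "partial_sel I L \<rho>" "through_q \<rho>" "q \<noteq> c"
    and avoider: "i0 \<in> I" "y0 \<in> L i0" "q \<notin> Y y0"
    and path: "(comparable_in (link_sels Y q c \<rho>))\<^sup>*\<^sup>* \<sigma>1 \<sigma>2"
    and start: "\<forall>f\<in>P. \<sigma>1 \<subseteq>\<^sub>m f \<longrightarrow> reach s f"
  shows "\<forall>f\<in>P. \<sigma>2 \<subseteq>\<^sub>m f \<longrightarrow> reach s f"
  using path
proof (induction rule: rtranclp_induct)
  case base
  show ?case
    by (rule start)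
next
  case (step g g')
  have "g \<in> link_sels Y q c \<rho>" "g' \<in> link_sels Y q c \<rho>" "g \<subseteq>\<^sub>m g' \<or> g' \<subseteq>\<^sub>m g"
    using step(2) unfolding comparable_in_def by auto
  then have g: "g \<subseteq>\<^sub>m \<rho>" "dom g \<noteq> dom \<rho>" "blocking g" and "blocking g'"
    and "g \<subseteq>\<^sub>m g' \<or> g' \<subseteq>\<^sub>m g"
    unfolding link_sels_iff[OF \<rho>] by blast+
  then consider "g \<subseteq>\<^sub>m g'" | "g' \<subseteq>\<^sub>m g"
    by blast
  then show ?case
  proof cases
    case 1
    then show ?thesis
      using step.IH map_le_trans[OF 1] by blast
  next
    case 2
    show ?thesis
      using reach_transport_down[OF \<rho>(1,2) avoider g 2 \<open>blocking g'\<close> step.IH] .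
  qed
qed

end

locale sweep_step_link = sweep_step +
  assumes link_connected: "\<And>\<rho>. partial_sel I L \<rho> \<Longrightarrow> \<forall>y\<in>ran \<rho>. q \<in> Y y \<Longrightarrow> q \<noteq> c \<Longrightarrow>
    e + 2 \<le> card (dom \<rho>) \<Longrightarrow> comparability_connected (link_sels Y q c \<rho>)"
begin

lemma reach_across_link:
  assumes \<rho>: "partial_sel I L \<rho>" "through_q \<rho>" "q \<noteq> c"
    and avoider: "i0 \<in> I" "y0 \<in> L i0" "q \<notin> Y y0"
    and not_extendable:
      "\<not> (\<exists>i y. i \<in> I \<and> i \<notin> dom \<rho> \<and> y \<in> L i \<and> q \<notin> Y y \<and> admissible I L proper (\<rho>(i \<mapsto> y)))"
    and \<sigma>1: "\<sigma>1 \<subseteq>\<^sub>m \<rho>" "blocking \<sigma>1" "card (dom \<sigma>1) \<le> e" "\<forall>f\<in>P. \<sigma>1 \<subseteq>\<^sub>m f \<longrightarrow> reach s f"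
    and \<sigma>2: "\<sigma>2 \<subseteq>\<^sub>m \<rho>" "blocking \<sigma>2" "card (dom \<sigma>2) \<le> e"
  shows "\<forall>f\<in>P. \<sigma>2 \<subseteq>\<^sub>m f \<longrightarrow> reach s f"
proof -
  have card_\<rho>: "e + 2 \<le> card (dom \<rho>)"
    using card_dom_if_not_extendable[OF \<rho>(1,2) avoider not_extendable] .
  have in_link: "g \<in> link_sels Y q c \<rho>" if "g \<subseteq>\<^sub>m \<rho>" "blocking g" "card (dom g) \<le> e" for g
  proof -
    have "dom g \<noteq> dom \<rho>"
      using that(3) card_\<rho> by auto
    then show ?thesis
      using link_sels_iff[OF \<rho>] that(1,2) by blast
  qed
  have "(comparable_in (link_sels Y q c \<rho>))\<^sup>*\<^sup>* \<sigma>1 \<sigma>2"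
    using link_connected[OF \<rho> card_\<rho>] in_link[OF \<sigma>1(1-3)] in_link[OF \<sigma>2]
    unfolding comparability_connected_def by blast
  then show ?thesis
    using reach_along_link[OF \<rho> avoider _ \<sigma>1(4)] by blast
qed

lemma anchored_below_swept_face:
  assumes \<rho>: "partial_sel I L \<rho>" "through_q \<rho>" "blocking \<rho>"
    and \<beta>1: "\<beta>1 \<subseteq>\<^sub>m \<rho>" "blocking \<beta>1" "anchored s \<beta>1"
    and \<beta>2: "\<beta>2 \<subseteq>\<^sub>m \<rho>" "blocking \<beta>2"
  shows "\<exists>\<sigma>. \<sigma> \<subseteq>\<^sub>m \<beta>2 \<and> blocking \<sigma> \<and> anchored s \<sigma>"
proof -
  have below: "partial_sel I L g" "through_q g" if "g \<subseteq>\<^sub>m \<rho>" for g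
    using partial_sel_map_le[OF \<rho>(1) that] \<rho>(2) ran_map_le[OF that] by blast+
  obtain f1 where f1: "f1 \<in> P" "\<beta>1 \<subseteq>\<^sub>m f1" "reach s f1"
    using \<beta>1(3) by blast
  obtain i0 y0 where "f1 i0 = Some y0" "q \<notin> Y y0" "i0 \<in> I" "y0 \<in> L i0" "i0 \<notin> dom \<beta>1"
    using unswept_above_blockingE[OF f1(1,2) below(2)[OF \<beta>1(1)] \<beta>1(2)] .
  then have avoider: "i0 \<in> I" "y0 \<in> L i0" "q \<notin> Y y0"
    by blast+
  obtain \<sigma>1 where \<sigma>1: "\<sigma>1 \<subseteq>\<^sub>m \<beta>1" "blocking \<sigma>1" "card (dom \<sigma>1) \<le> e"
    using blocking_small_subface[OF below[OF \<beta>1(1)] \<beta>1(2)] by blast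
  obtain \<sigma>2 where \<sigma>2: "\<sigma>2 \<subseteq>\<^sub>m \<beta>2" "blocking \<sigma>2" "card (dom \<sigma>2) \<le> e"
    using blocking_small_subface[OF below[OF \<beta>2(1)] \<beta>2(2)] by blast
  note \<sigma>1_sel = below[OF map_le_trans[OF \<sigma>1(1) \<beta>1(1)]]
  note \<sigma>2_sel = below[OF map_le_trans[OF \<sigma>2(1) \<beta>2(1)]]
  have reach_\<sigma>2: "\<forall>f\<in>P. \<sigma>2 \<subseteq>\<^sub>m f \<longrightarrow> reach s f"
  proof (cases "q = c")
    case True
    \<comment> \<open>the ball is empty, so the empty selection is a small blocking face below everything\<close>
    then have "\<forall>f\<in>P. Map.empty \<subseteq>\<^sub>m f \<longrightarrow> reach s f"
      using f1 by (intro reach_above_small_from) (auto simp: partial_sel_def)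
    then show ?thesis
      by simp
  next
    case False
    show ?thesis
    proof (cases "\<exists>i y. i \<in> I \<and> i \<notin> dom \<rho> \<and> y \<in> L i \<and> q \<notin> Y y \<and> admissible I L proper (\<rho>(i \<mapsto> y))")
      case True
      then obtain i y where iy: "i \<notin> dom \<rho>" "q \<notin> Y y" "admissible I L proper (\<rho>(i \<mapsto> y))"
        by blast
      have "\<not> through_q (\<rho>(i \<mapsto> y))"
        using iy(1,2) by (auto simp: domIff)
      then have "\<rho>(i \<mapsto> y) \<in> P"
        using unswept_above_blocking[OF iy(3) map_le_upd_new[OF iy(1)] \<rho>(2,3)] by blast
      moreover have "\<beta>1 \<subseteq>\<^sub>m \<rho>(i \<mapsto> y)" "\<sigma>2 \<subseteq>\<^sub>m \<rho>(i \<mapsto> y)"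
        using map_le_trans[OF _ map_le_upd_new[OF iy(1)]] \<beta>1(1) map_le_trans[OF \<sigma>2(1) \<beta>2(1)] by blast+
      ultimately show ?thesis
        using reach_above_small_from[OF \<sigma>2_sel \<sigma>2(2,3)] \<beta>1(3) by blast
    next
      case not_extendable: False
      have "\<forall>f\<in>P. \<sigma>1 \<subseteq>\<^sub>m f \<longrightarrow> reach s f"
        using reach_above_small_from[OF \<sigma>1_sel \<sigma>1(2,3) f1(1) map_le_trans[OF \<sigma>1(1) f1(2)] f1(3)] .
      then show ?thesis
        using reach_across_link[OF \<rho>(1,2) False avoider not_extendable map_le_trans[OF \<sigma>1(1) \<beta>1(1)]
            \<sigma>1(2,3) _ map_le_trans[OF \<sigma>2(1) \<beta>2(1)] \<sigma>2(2,3)]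
        by blast
    qed
  qed
  obtain i y where iy: "i \<notin> dom \<sigma>2" "\<sigma>2(i \<mapsto> y) \<in> P"
    using unswept_upd_exists[OF \<sigma>2_sel \<sigma>2(2,3) avoider] .
  have "\<exists>f\<in>P. \<sigma>2 \<subseteq>\<^sub>m f"
    using iy(2) map_le_upd_new[OF iy(1)] by blast
  with reach_\<sigma>2 have "anchored s \<sigma>2"
    by (rule conjI)
  then show ?thesis
    using \<sigma>2(1,2) by (intro exI[of _ \<sigma>2]) simp
qed

lemma removed_face:
  assumes "v \<in> P'" "v \<notin> P"
  shows "partial_sel I L v" "through_q v" "blocking v" "v \<in> swept I L Y c K"
proof -
  have "admissible I L proper v" "v \<notin> swept I L Y c (K - {q})"
    using assms(1) unfolding unswept_def by auto
  moreover have "v \<in> swept I L Y c K"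
    using assms calculation(1) unfolding unswept_def by auto
  ultimately show "partial_sel I L v" "through_q v" "blocking v" "v \<in> swept I L Y c K"
    using swept_at_q_iff unfolding admissible_def by blast+
qed

lemma unswept_not_below_removed:
  assumes "v \<in> P'" "v \<notin> P" "u \<in> P"
  shows "\<not> u \<subseteq>\<^sub>m v"
  using swept_map_le[OF removed_face(4)[OF assms(1,2)]] assms(3) unfolding unswept_def by blast

text \<open>Along a path in \<open>P'\<close>, a removed face is represented by an anchored blocking face below it.\<close>

abbreviation "tracked s v \<equiv> (v \<in> P \<longrightarrow> reach s v) \<and>
  (v \<notin> P \<longrightarrow> (\<exists>\<beta>. \<beta> \<subseteq>\<^sub>m v \<and> blocking \<beta> \<and> anchored s \<beta>))"

lemma tracked_step_from_unswept:
  assumes u: "u \<in> P" "reach s u" and uv: "comparable_in P' u v"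
  shows "tracked s v"
proof -
  have v: "v \<in> P'" and "u \<subseteq>\<^sub>m v \<or> v \<subseteq>\<^sub>m u"
    using uv unfolding comparable_in_def by auto
  show ?thesis
  proof (cases "v \<in> P")
    case True
    then have "comparable_in P u v"
      unfolding comparable_in_def using u(1) \<open>u \<subseteq>\<^sub>m v \<or> v \<subseteq>\<^sub>m u\<close> by blast
    then have "reach s v"
      using u(2) r_into_rtranclp[of "comparable_in P"] by (metis rtranclp_trans)
    then show ?thesis
      using True by simp
  next
    case False
    note v_removed = removed_face[OF v False]
    have vu: "v \<subseteq>\<^sub>m u"
      using unswept_not_below_removed[OF v False u(1)] \<open>u \<subseteq>\<^sub>m v \<or> v \<subseteq>\<^sub>m u\<close> by blast
    have "reach s f" if "f \<in> P" "v \<subseteq>\<^sub>m f" for f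
      using u(2) reach_above_blocking[OF v_removed(1-3) u(1) that(1) vu that(2)] by (rule rtranclp_trans)
    then have "anchored s v"
      using u(1) vu by blast
    then show ?thesis
      using False v_removed(3) map_le_refl by blast
  qed
qed

lemma tracked_step_from_removed:
  assumes u: "u \<in> P'" "u \<notin> P" and \<beta>: "\<beta> \<subseteq>\<^sub>m u" "blocking \<beta>" "anchored s \<beta>"
    and uv: "comparable_in P' u v"
  shows "tracked s v"
proof -
  have v: "v \<in> P'" and "u \<subseteq>\<^sub>m v \<or> v \<subseteq>\<^sub>m u"
    using uv unfolding comparable_in_def by auto
  show ?thesis
  proof (cases "u \<subseteq>\<^sub>m v")
    case True
    have "\<beta> \<subseteq>\<^sub>m v"
      using \<beta>(1) True by (rule map_le_trans)
    then show ?thesis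
      using \<beta>(2,3) by blast
  next
    case False
    then have vu: "v \<subseteq>\<^sub>m u"
      using \<open>u \<subseteq>\<^sub>m v \<or> v \<subseteq>\<^sub>m u\<close> by blast
    then have "v \<notin> P"
      using unswept_not_below_removed[OF u] by blast
    then show ?thesis
      using anchored_below_swept_face[OF removed_face(1-3)[OF u] \<beta> vu removed_face(3)[OF v]] by blast
  qed
qed

lemma sweep_step_connected:
  assumes "comparability_connected P'"
  shows "comparability_connected P"
  unfolding comparability_connected_def
proof (intro ballI)
  fix s t assume s: "s \<in> P" and t: "t \<in> P"
  have "P \<subseteq> P'"
    unfolding unswept_def swept_def by auto
  then have "(comparable_in P')\<^sup>*\<^sup>* s t"
    using assms s t unfolding comparability_connected_def by blast
  then have "tracked s t"
  proof (induction rule: rtranclp_induct)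
    case base
    then show ?case
      using s by simp
  next
    case (step u v)
    then have "u \<in> P'"
      unfolding comparable_in_def by blast
    then show ?case
      using tracked_step_from_unswept tracked_step_from_removed step.IH step(2) by blast
  qed
  then show "reach s t"
    using t by blast
qed

end

section \<open>Connectivity of the complement of the nerve\<close>

lemma finite_key_points:
  assumes "finite I" "\<forall>i\<in>I. finite (L i)"
  shows "finite (key_points I L Y c)"
proof -
  have "key_points I L Y c \<subseteq> key_point Y c ` {f. partial_sel I L f}"
    unfolding key_points_def by auto
  then show ?thesis
    using finite_partial_sels[OF assms] finite_surj by blast
qed

lemma unswept_nothing_connected:
  assumes "conn_setting I L Y proper S e"
  shows "comparability_connected (unswept I L Y proper c {})"
proof -
  have "I \<noteq> {}"
    using assms unfolding conn_setting_def by (cases proper) auto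
  then have empty: "Map.empty \<in> unswept I L Y proper c {}"
    unfolding unswept_def swept_def admissible_def partial_sel_def by simp
  \<comment> \<open>a cone with apex the empty selection\<close>
  show ?thesis
    unfolding comparability_connected_def
    using comparable_in_map_le(1)[OF empty] comparable_in_map_le(2)[OF _ empty] rtranclp_trans
    by (metis map_le_empty)
qed

lemma downclosed_keys_Diff_farthest:
  assumes "downclosed_keys I L Y c K" "\<forall>q'\<in>K. dist c q' \<le> dist c q"
  shows "downclosed_keys I L Y c (K - {q})"
  unfolding downclosed_keys_def
proof (intro ballI impI)
  fix q1 q2 assume "q1 \<in> K - {q}" "q2 \<in> key_points I L Y c" "dist c q2 < dist c q1"
  moreover from this have "q2 \<noteq> q"
    using assms(2) by force
  ultimately show "q2 \<in> K - {q}"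
    using assms(1) unfolding downclosed_keys_def by blast
qed

lemma unswept_connected_step:
  fixes I :: "'i set" and L :: "'i \<Rightarrow> 'l set" and Y :: "'l \<Rightarrow> 'a::euclidean_space set"
  assumes setting: "conn_setting I L Y proper S e" and compact: "\<forall>i\<in>I. \<forall>y\<in>L i. compact (Y y)"
    and centre: "c \<in> S"
    and lower_dim: "\<And>(I' :: 'i set) (L' :: 'i \<Rightarrow> 'l set) (Y' :: 'l \<Rightarrow> 'a set) S'.
      0 < e \<Longrightarrow> conn_setting I' L' Y' True S' (e - 1) \<Longrightarrow> comparability_connected (empty_sels I' L' Y' True)"
    and K: "downclosed_keys I L Y c K" "q \<in> K" "\<forall>q'\<in>K. dist c q' \<le> dist c q"
    and prev: "comparability_connected (unswept I L Y proper c (K - {q}))"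
  shows "comparability_connected (unswept I L Y proper c K)"
proof -
  interpret sweep_step I L Y proper S e c K q
    by (rule sweep_step.intro) (use setting compact centre K in auto)
  interpret sweep_step_link I L Y proper S e c K q
  proof
    fix \<rho> assume \<rho>: "partial_sel I L \<rho>" "\<forall>y\<in>ran \<rho>. q \<in> Y y" "q \<noteq> c" "e + 2 \<le> card (dom \<rho>)"
    obtain S' where "conn_setting (dom \<rho>) (\<lambda>i. {the (\<rho> i)}) (\<lambda>y. dir_section q (q - c) (Y y)) True S' (e - 1)"
      using conn_setting_link(2)[OF \<rho>] by blast
    then show "comparability_connected (link_sels Y q c \<rho>)"
      unfolding link_sels_def using lower_dim conn_setting_link(1)[OF \<rho>] by simp
  qed
  show ?thesis
    using sweep_step_connected[OF prev] .
qed

lemma unswept_connected: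
  fixes I :: "'i set" and L :: "'i \<Rightarrow> 'l set" and Y :: "'l \<Rightarrow> 'a::euclidean_space set"
  assumes setting: "conn_setting I L Y proper S e" and compact: "\<forall>i\<in>I. \<forall>y\<in>L i. compact (Y y)"
    and centre: "c \<in> S"
    and lower_dim: "\<And>(I' :: 'i set) (L' :: 'i \<Rightarrow> 'l set) (Y' :: 'l \<Rightarrow> 'a set) S'.
      0 < e \<Longrightarrow> conn_setting I' L' Y' True S' (e - 1) \<Longrightarrow> comparability_connected (empty_sels I' L' Y' True)"
  shows "K \<subseteq> key_points I L Y c \<Longrightarrow> downclosed_keys I L Y c K \<Longrightarrow>
    comparability_connected (unswept I L Y proper c K)"
proof (induction "card K" arbitrary: K rule: less_induct)
  case less
  have "finite K"
    using setting finite_subset[OF less.prems(1) finite_key_points] unfolding conn_setting_def by blast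
  show ?case
  proof (cases "K = {}")
    case True
    then show ?thesis
      using unswept_nothing_connected[OF setting] by simp
  next
    case False
    \<comment> \<open>the farthest key is swept last\<close>
    have "Max (dist c ` K) \<in> dist c ` K"
      using \<open>finite K\<close> False by simp
    then obtain q where "q \<in> K" "dist c q = Max (dist c ` K)"
      by auto
    then have q: "q \<in> K" "\<forall>q'\<in>K. dist c q' \<le> dist c q"
      using \<open>finite K\<close> by simp_all
    have prev: "comparability_connected (unswept I L Y proper c (K - {q}))"
      using less.hyps[OF card_Diff1_less[OF \<open>finite K\<close> q(1)]] less.prems(1)
        downclosed_keys_Diff_farthest[OF less.prems(2) q(2)] by blast
    show ?thesis
      using lower_dim by (rule unswept_connected_step[OF setting compact centre _ less.prems(2) q prev])
  qed
qed

lemma convex_compact_shrinking: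
  fixes Y :: "'l \<Rightarrow> 'a::euclidean_space set"
  assumes "finite \<Lambda>" "\<forall>y\<in>\<Lambda>. convex (Y y)"
  obtains Y' where "\<forall>y\<in>\<Lambda>. convex (Y' y) \<and> compact (Y' y) \<and> Y' y \<subseteq> Y y"
    and "\<forall>T\<subseteq>\<Lambda>. \<Inter>(Y' ` T) = {} \<longleftrightarrow> \<Inter>(Y ` T) = {}"
proof
  \<comment> \<open>keep one witness point of every nonempty intersection\<close>
  define pt where "pt T = (SOME x. x \<in> \<Inter>(Y ` T))" for T
  define Y' where "Y' y = convex hull (pt ` {T. T \<subseteq> \<Lambda> \<and> y \<in> T \<and> \<Inter>(Y ` T) \<noteq> {}})" for y
  have pt: "pt T \<in> \<Inter>(Y ` T)" if "\<Inter>(Y ` T) \<noteq> {}" for T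
    unfolding pt_def using that by (metis ex_in_conv someI_ex)
  show props: "\<forall>y\<in>\<Lambda>. convex (Y' y) \<and> compact (Y' y) \<and> Y' y \<subseteq> Y y"
  proof (intro ballI conjI)
    fix y assume "y \<in> \<Lambda>"
    show "convex (Y' y)"
      unfolding Y'_def by (rule convex_convex_hull)
    have "finite {T. T \<subseteq> \<Lambda> \<and> y \<in> T \<and> \<Inter>(Y ` T) \<noteq> {}}"
      using assms(1) by (rule rev_finite_subset[OF finite_Pow_iff[THEN iffD2]]) auto
    then show "compact (Y' y)"
      unfolding Y'_def by (intro finite_imp_compact_convex_hull finite_imageI)
    show "Y' y \<subseteq> Y y"
      unfolding Y'_def using pt assms(2) \<open>y \<in> \<Lambda>\<close> by (intro hull_minimal) blast+
  qed
  show "\<forall>T\<subseteq>\<Lambda>. \<Inter>(Y' ` T) = {} \<longleftrightarrow> \<Inter>(Y ` T) = {}"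
  proof (intro allI impI iffI)
    fix T assume T: "T \<subseteq> \<Lambda>" "\<Inter>(Y' ` T) = {}"
    show "\<Inter>(Y ` T) = {}"
    proof (rule ccontr)
      assume "\<Inter>(Y ` T) \<noteq> {}"
      then have "pt T \<in> Y' y" if "y \<in> T" for y
        unfolding Y'_def using T(1) that by (intro hull_inc) blast
      then show False
        using T(2) by blast
    qed
  next
    fix T assume "T \<subseteq> \<Lambda>" "\<Inter>(Y ` T) = {}"
    then show "\<Inter>(Y' ` T) = {}"
      using props by blast
  qed
qed

lemma empty_sels_connected:
  fixes I :: "'i set" and L :: "'i \<Rightarrow> 'l set" and Y :: "'l \<Rightarrow> 'a::euclidean_space set"
  assumes "conn_setting I L Y proper S e"
  shows "comparability_connected (empty_sels I L Y proper)"
  using assms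
proof (induction e arbitrary: I L Y proper S rule: less_induct)
  case (less e)
  define \<Lambda> where "\<Lambda> = \<Union>(L ` I)"
  have setting: "finite \<Lambda>" "\<forall>y\<in>\<Lambda>. convex (Y y)" "\<And>i. i \<in> I \<Longrightarrow> L i \<subseteq> \<Lambda>"
    using less.prems unfolding conn_setting_def \<Lambda>_def by auto
  \<comment> \<open>key points need closed sets; shrinking to compact ones keeps the nerve\<close>
  obtain Y' where Y': "\<forall>y\<in>\<Lambda>. convex (Y' y) \<and> compact (Y' y) \<and> Y' y \<subseteq> Y y"
    "\<forall>T\<subseteq>\<Lambda>. \<Inter>(Y' ` T) = {} \<longleftrightarrow> \<Inter>(Y ` T) = {}"
    using convex_compact_shrinking[OF setting(1,2)] by blast
  have same_empty: "sel_Inter Y' f = {} \<longleftrightarrow> sel_Inter Y f = {}" if "partial_sel I L f" for f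
  proof -
    have "ran f \<subseteq> \<Lambda>"
      using that setting(3) by (blast elim: partial_sel_ranE)
    then show ?thesis
      unfolding sel_Inter_def using Y'(2) by blast
  qed
  have setting': "conn_setting I L Y' proper S e"
    using less.prems Y' setting(3) unfolding conn_setting_def by (simp add: subset_iff)
  have compact: "\<forall>i\<in>I. \<forall>y\<in>L i. compact (Y' y)"
    using Y'(1) setting(3) by blast
  obtain c where "c \<in> S"
    using less.prems unfolding conn_setting_def by blast
  have lower_dim: "comparability_connected (empty_sels I' L' Y'' True)"
    if "0 < e" "conn_setting I' L' Y'' True S' (e - 1)"
    for I' :: "'i set" and L' :: "'i \<Rightarrow> 'l set" and Y'' :: "'l \<Rightarrow> 'a set" and S'
    using less.IH[of "e - 1", OF _ that(2)] that(1) by simp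
  have "comparability_connected (unswept I L Y' proper c (key_points I L Y' c))"
  proof (rule unswept_connected[OF setting' compact \<open>c \<in> S\<close>])
    show "downclosed_keys I L Y' c (key_points I L Y' c)"
      unfolding downclosed_keys_def by blast
  qed (use lower_dim in auto)
  moreover have "f \<in> unswept I L Y' proper c (key_points I L Y' c) \<longleftrightarrow> f \<in> empty_sels I L Y proper"
    for f
    unfolding unswept_def swept_def key_points_def empty_sels_def admissible_def
    using same_empty[of f] by auto
  ultimately show ?case
    by (metis subsetI subset_antisym)
qed

section \<open>Lifting paths to the graph\<close>

definition sel_of_list :: "nat \<Rightarrow> 'x list \<Rightarrow> nat \<Rightarrow> 'x option" where
  "sel_of_list n C = (\<lambda>i. if i < n then Some (C ! i) else None)"

definition completions :: "nat \<Rightarrow> (nat \<Rightarrow> 'a set set) \<Rightarrow> (nat \<Rightarrow> 'a set option) \<Rightarrow> 'a set list set" where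
  "completions n F g = {E. rg_vertex n F E \<and> (\<forall>i y. g i = Some y \<longrightarrow> E ! i = y)}"

lemma Inter_nth_subset_Inter_ran:
  assumes "dom g \<subseteq> A" "\<forall>i y. g i = Some y \<longrightarrow> E ! i = y"
  shows "(\<Inter>i\<in>A. E ! i) \<subseteq> \<Inter>(ran g)"
proof
  fix x assume x: "x \<in> (\<Inter>i\<in>A. E ! i)"
  show "x \<in> \<Inter>(ran g)"
  proof
    fix y assume "y \<in> ran g"
    then obtain i where "g i = Some y"
      unfolding ran_def by blast
    then show "x \<in> y"
      using x assms by (metis INT_D domI subsetD)
  qed
qed

lemma completions_antimono: "g \<subseteq>\<^sub>m g' \<Longrightarrow> completions n F g' \<subseteq> completions n F g"
  unfolding completions_def by (auto dest: map_le_SomeD)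

lemma empty_sels_nat_iff:
  "g \<in> empty_sels {..<n} F id False \<longleftrightarrow>
    dom g \<subseteq> {..<n} \<and> (\<forall>i y. g i = Some y \<longrightarrow> y \<in> F i) \<and> \<Inter>(ran g) = {}"
  unfolding empty_sels_def admissible_def partial_sel_def sel_Inter_def by simp

lemma update_in_completions:
  assumes g: "g \<in> empty_sels {..<n} F id False"
    and E: "E1 \<in> completions n F g" "E2 \<in> completions n F g" and j: "j < n"
  shows "E1[j := E2 ! j] \<in> completions n F g"
proof -
  let ?E = "E1[j := E2 ! j]"
  have E1: "rg_vertex n F E1" "\<forall>i y. g i = Some y \<longrightarrow> E1 ! i = y"
    and E2: "rg_vertex n F E2" "\<forall>i y. g i = Some y \<longrightarrow> E2 ! i = y"
    using E unfolding completions_def by auto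
  then have len: "length E1 = n"
    unfolding rg_vertex_def by simp
  have nth_E: "?E ! i = (if i = j then E2 ! j else E1 ! i)" if "i < n" for i
    using that len by simp
  have g_sel: "dom g \<subseteq> {..<n}" "\<Inter>(ran g) = {}"
    using g unfolding empty_sels_nat_iff by auto
  have agree: "\<forall>i y. g i = Some y \<longrightarrow> ?E ! i = y"
  proof (intro allI impI)
    fix i y assume "g i = Some y"
    moreover from this have "i < n"
      using g_sel(1) by auto
    ultimately show "?E ! i = y"
      using E1(2) E2(2) nth_E[of i] by (cases "i = j") auto
  qed
  have "\<forall>i<n. ?E ! i \<in> F i"
    using E1(1) E2(1) nth_E unfolding rg_vertex_def by simp
  moreover have "(\<Inter>i\<in>{..<n}. ?E ! i) = {}"
    using Inter_nth_subset_Inter_ran[OF g_sel(1) agree] g_sel(2) by blast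
  ultimately show ?thesis
    unfolding completions_def rg_vertex_def using len agree by simp
qed

lemma rg_adj_update:
  assumes g: "g \<in> empty_sels {..<n} F id False"
    and E: "E1 \<in> completions n F g" "E2 \<in> completions n F g" and j: "j < n" "E1 ! j \<noteq> E2 ! j"
  shows "rg_adj n F E1 (E1[j := E2 ! j])"
proof -
  let ?E = "E1[j := E2 ! j]"
  have E1: "rg_vertex n F E1" "\<forall>i y. g i = Some y \<longrightarrow> E1 ! i = y"
    and E2: "\<forall>i y. g i = Some y \<longrightarrow> E2 ! i = y"
    using E unfolding completions_def by auto
  have g_sel: "dom g \<subseteq> {..<n}" "\<Inter>(ran g) = {}"
    using g unfolding empty_sels_nat_iff by auto
  have "j \<notin> dom g"
    using E1(2) E2 j(2) by (auto simp: dom_def)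
  \<comment> \<open>the colours other than \<open>j\<close> already carry the empty selection \<open>g\<close>\<close>
  then have "dom g \<subseteq> {..<n} - {j}"
    using g_sel(1) by blast
  from Inter_nth_subset_Inter_ran[OF this E1(2)]
  have others_empty: "(\<Inter>i\<in>{..<n} - {j}. E1 ! i) = {}"
    using g_sel(2) by simp
  have "length E1 = n"
    using E1(1) unfolding rg_vertex_def by simp
  then have differ: "E1 ! i \<noteq> ?E ! i \<longleftrightarrow> i = j" if "i < n" for i
    using that j(2) by (cases "i = j") auto
  have "\<exists>!j'. j' < n \<and> E1 ! j' \<noteq> ?E ! j'"
    using differ j(1) by (intro ex1I[of _ j]) auto
  moreover have "\<forall>j'<n. E1 ! j' \<noteq> ?E ! j' \<longrightarrow> (\<Inter>i\<in>{..<n} - {j'}. E1 ! i) = {}"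
    using differ others_empty by blast
  moreover have "rg_vertex n F ?E"
    using update_in_completions[OF g E j(1)] unfolding completions_def by blast
  ultimately show ?thesis
    unfolding rg_adj_def using E1(1) by blast
qed

lemma completions_connected:
  assumes g: "g \<in> empty_sels {..<n} F id False"
  shows "E1 \<in> completions n F g \<Longrightarrow> E2 \<in> completions n F g \<Longrightarrow> (rg_adj n F)\<^sup>*\<^sup>* E1 E2"
proof (induction "card {i. i < n \<and> E1 ! i \<noteq> E2 ! i}" arbitrary: E1 rule: less_induct)
  case less
  let ?D = "\<lambda>E. {i. i < n \<and> E ! i \<noteq> E2 ! i}"
  show ?case
  proof (cases "?D E1 = {}")
    case True
    then have "E1 = E2"
      using less.prems unfolding completions_def rg_vertex_def by (auto intro: nth_equalityI)
    then show ?thesis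
      by simp
  next
    case False
    then obtain j where j: "j < n" "E1 ! j \<noteq> E2 ! j"
      by blast
    let ?E = "E1[j := E2 ! j]"
    have len: "length E1 = n" "length E2 = n"
      using less.prems unfolding completions_def rg_vertex_def by simp_all
    have "?D ?E \<subseteq> ?D E1 - {j}"
    proof
      fix i assume "i \<in> ?D ?E"
      then have "i < n" "?E ! i \<noteq> E2 ! i"
        by simp_all
      moreover from this have "i \<noteq> j"
        using len by fastforce
      ultimately show "i \<in> ?D E1 - {j}"
        by simp
    qed
    have fin: "finite (?D E1)"
      by simp
    have "card (?D ?E) \<le> card (?D E1 - {j})"
      using fin \<open>?D ?E \<subseteq> ?D E1 - {j}\<close> by (intro card_mono) auto
    also have "\<dots> < card (?D E1)"
      using fin j by (intro card_Diff1_less) auto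
    finally have "card (?D ?E) < card (?D E1)" .
    then have "(rg_adj n F)\<^sup>*\<^sup>* ?E E2"
      using less.hyps update_in_completions[OF g less.prems j(1)] less.prems(2) by blast
    with rg_adj_update[OF g less.prems j] show ?thesis
      by (rule converse_rtranclp_into_rtranclp)
  qed
qed

lemma completions_nonempty:
  assumes g: "g \<in> empty_sels {..<n} F id False" and F: "\<forall>i<n. F i \<noteq> {}"
  shows "completions n F g \<noteq> {}"
proof -
  have g_sel: "dom g \<subseteq> {..<n}" "\<forall>i y. g i = Some y \<longrightarrow> y \<in> F i" "\<Inter>(ran g) = {}"
    using g unfolding empty_sels_nat_iff by auto
  define pick where "pick i = (case g i of Some y \<Rightarrow> y | None \<Rightarrow> (SOME x. x \<in> F i))" for i
  define E where "E = map pick [0..<n]"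
  have nth_E: "E ! i = pick i" if "i < n" for i
    unfolding E_def using that by simp
  have agree: "\<forall>i y. g i = Some y \<longrightarrow> E ! i = y"
    using nth_E g_sel(1) unfolding pick_def by (auto simp: subset_iff domI)
  have "\<forall>i<n. E ! i \<in> F i"
    using nth_E g_sel(2) F unfolding pick_def by (auto simp: some_in_eq split: option.split)
  moreover have "(\<Inter>i\<in>{..<n}. E ! i) = {}"
    using Inter_nth_subset_Inter_ran[OF g_sel(1) agree] g_sel(3) by blast
  ultimately have "E \<in> completions n F g"
    unfolding completions_def rg_vertex_def using agree by (simp add: E_def)
  then show ?thesis
    by blast
qed

lemma sel_of_list_in_empty_sels:
  assumes "rg_vertex n F C"
  shows "sel_of_list n C \<in> empty_sels {..<n} F id False"
proof -
  have "ran (sel_of_list n C) = (\<lambda>i. C ! i) ` {..<n}"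
    unfolding ran_def sel_of_list_def by (auto split: if_splits)
  then show ?thesis
    using assms unfolding empty_sels_nat_iff rg_vertex_def sel_of_list_def
    by (auto split: if_splits)
qed

lemma completions_sel_of_list:
  assumes "rg_vertex n F C"
  shows "completions n F (sel_of_list n C) = {C}"
  using assms unfolding completions_def sel_of_list_def rg_vertex_def
  by (auto intro: nth_equalityI)

lemma rg_connected_if_empty_sels_connected:
  assumes F: "\<forall>i<n. F i \<noteq> {}" and conn: "comparability_connected (empty_sels {..<n} F id False)"
  shows "rg_connected n F"
  unfolding rg_connected_def
proof (intro allI impI)
  fix C D assume CD: "rg_vertex n F C \<and> rg_vertex n F D"
  let ?P = "empty_sels {..<n} F id False"
  \<comment> \<open>along a path of selections, all completions of the current selection stay reachable from \<open>C\<close>\<close>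
  have "\<forall>E\<in>completions n F g. (rg_adj n F)\<^sup>*\<^sup>* C E"
    if "(comparable_in ?P)\<^sup>*\<^sup>* (sel_of_list n C) g" for g
    using that
  proof (induction rule: rtranclp_induct)
    case base
    then show ?case
      using completions_sel_of_list[of n F C] CD by simp
  next
    case (step g g')
    have "g \<in> ?P" "g' \<in> ?P" "g \<subseteq>\<^sub>m g' \<or> g' \<subseteq>\<^sub>m g"
      using step(2) unfolding comparable_in_def by auto
    then consider "g \<subseteq>\<^sub>m g'" | "g' \<subseteq>\<^sub>m g" "g \<in> ?P" "g' \<in> ?P"
      by blast
    then show ?case
    proof cases
      case 1
      then show ?thesis
        using step.IH completions_antimono by blast
    next
      case 2
      then obtain E0 where "E0 \<in> completions n F g"
        using completions_nonempty F by blast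
      then show ?thesis
        using step.IH completions_antimono[OF 2(1)] completions_connected[OF 2(3)] rtranclp_trans
        by (metis subsetD)
    qed
  qed
  moreover have "(comparable_in ?P)\<^sup>*\<^sup>* (sel_of_list n C) (sel_of_list n D)"
    using conn CD sel_of_list_in_empty_sels unfolding comparability_connected_def by blast
  ultimately show "(rg_adj n F)\<^sup>*\<^sup>* C D"
    using completions_sel_of_list CD by blast
qed

theorem theorem7p4:
  fixes F :: "nat \<Rightarrow> ('a::euclidean_space) set set" and n :: nat
  assumes "\<And>i. i < n \<Longrightarrow> finite (F i)"
    and "\<And>i C. i < n \<Longrightarrow> C \<in> F i \<Longrightarrow> convex C"
    and "\<And>i. i < n \<Longrightarrow> \<Inter>(F i) = {}"
    and "n \<ge> DIM('a) + 2"
  shows "rg_connected n F"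
proof (rule rg_connected_if_empty_sels_connected)
  show F_ne: "\<forall>i<n. F i \<noteq> {}"
    using assms(3) by fastforce
  have "conn_setting {..<n} F id False (UNIV :: 'a set) DIM('a)"
    unfolding conn_setting_def using assms F_ne by simp
  then show "comparability_connected (empty_sels {..<n} F id False)"
    by (rule empty_sels_connected)
qed

end
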